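(* Let $v,a,b,c\in\mathbb{C}$ with $\Re(v)<3$, $\Re(c)>0$, and $\Re(vc+a+b)>0$, $\Re(vc+a-b)>0$, $\Re(vc-a+b)>0$, $\Re(vc-a-b)>0$. Fix a square root $\sqrt{a^2-b^2}$ and put $\sigma_1=\frac v2-\frac{\sqrt{a^2-b^2}}{2c}$, $\sigma_2=\frac v2+\frac{\sqrt{a^2-b^2}}{2c}$, $\sigma_3=\frac v2-\frac{a}{2c}-\frac{b}{2c}$, $\sigma_4=\frac v2-\frac{a}{2c}+\frac{b}{2c}$, $\sigma_5=\frac v2+\frac{a}{2c}+\frac{b}{2c}$, $\sigma_6=\frac v2+\frac{a}{2c}-\frac{b}{2c}$, $P=(vc-a-b)(vc+a+b)(vc-a+b)(vc+a-b)$; assume $\sigma_1,\sigma_2\notin\mathbb{Z}_0^-$ and $1+\sigma_j\notin\mathbb{Z}_0^-$ ($j=3,4,5,6$). Then $$ \int_0^\infty\frac{\sinh(ax)\cosh(bx)}{\cosh^{v}(cx)}\,dx=\frac{2^{v}(v^2ac^2-a^3+ab^2)}{P}\;{}_7F_6\!\left(\begin{matrix}v,\ 1+\sigma_1,\ 1+\sigma_2,\ \sigma_3,\ \sigma_4,\ \sigma_5,\ \sigma_6\\ \sigma_1,\ \sigma_2,\ 1+\sigma_3,\ 1+\sigma_4,\ 1+\sigma_5,\ 1+\sigma_6\end{matrix};\,-1\right). $$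
   Context: $\mathbb{Z}_0^-=\{0,-1,-2,\dots\}$. The Pochhammer symbol is $(\lambda)_0=1$, $(\lambda)_n=\lambda(\lambda+1)\cdots(\lambda+n-1)$ for $n\ge1$. The generalized hypergeometric series is ${}_pF_q\!\left(\begin{matrix}\alpha_1,\dots,\alpha_p\\ \beta_1,\dots,\beta_q\end{matrix};z\right)=\sum_{n=0}^\infty\frac{(\alpha_1)_n\cdots(\alpha_p)_n}{(\beta_1)_n\cdots(\beta_q)_n}\frac{z^n}{n!}$ (with no $\beta_j\in\mathbb{Z}_0^-$); when $p=q+1$ and $z=-1$ it converges if $\Re(\sum\beta_j-\sum\alpha_i)>-1$. For $\Re(c)>0$ and $x>0$, the complex power $\cosh^{v}(cx)$ means $2^{-v}e^{vcx}(1+e^{-2cx})^{v}$, with the principal branch of $(1+e^{-2cx})^{v}$ (this agrees with the ordinary real power when $c>0$ and $v$ is real). *)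

theory Defs
  imports "HOL-Analysis.Analysis"
begin

definition hypergeom :: "complex list \<Rightarrow> complex list \<Rightarrow> complex \<Rightarrow> complex" where
  "hypergeom as bs z =
     (\<Sum>n. (\<Prod>a\<leftarrow>as. pochhammer a n) / (\<Prod>b\<leftarrow>bs. pochhammer b n) * z ^ n / fact n)"

text \<open>Complex power cosh^v(c x) := 2^(-v) e^(v c x) (1 + e^(-2 c x))^v, principal branch.\<close>
definition cosh_pow :: "complex \<Rightarrow> complex \<Rightarrow> real \<Rightarrow> complex" where
  "cosh_pow v c x = (2::complex) powr (-v) * exp (v * c * complex_of_real x)
      * (1 + exp (-2 * c * complex_of_real x)) powr v"

end

theory Submission
  imports Defs "HOL-Real_Asymp.Real_Asymp"
begin

text \<open>
  Writing \<open>w = exp(-2cx)\<close>, the integrand is \<open>2^v (1 + w)^(-v) exp(-vcx) sinh(ax) cosh(bx)\<close>.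
  For \<open>0 \<le> r < 1\<close> the binomial series of \<open>(1 + r w)^(-v)\<close> may be integrated termwise:
  the \<open>k\<close>-th term is a combination of four exponentials, its integral is a rational function
  of \<open>k\<close>, and together with the binomial coefficient \<open>(-v choose k)\<close> it is exactly the
  prefactor times the \<open>k\<close>-th term of the \<open>7F6\<close> series. As \<open>r \<rightarrow> 1\<close> the integrals converge by
  dominated convergence (\<open>1 + r w\<close> stays away from 0), and the series converge by Abel's
  theorem, because the \<open>7F6\<close> series at \<open>-1\<close> converges: its terms are \<open>O(k^(Re v - 3))\<close>
  and the sums of consecutive pairs of terms are \<open>O(k^(Re v - 4))\<close>.
\<close>

lemma has_integral_complex_exp_minus_interval:
  fixes \<mu> :: complex
  assumes "\<mu> \<noteq> 0" "T \<ge> 0"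
  shows "((\<lambda>x. exp (-(\<mu> * of_real x))) has_integral (1 - exp (-(\<mu> * of_real T)))/\<mu>) {0..T}"
proof -
  have "((\<lambda>x. - exp (-(\<mu> * x)) / \<mu>) has_vector_derivative exp (-(\<mu> * t))) (at t within {0..T})" for t
    using assms(1) by (intro derivative_eq_intros
        has_complex_derivative_imp_has_vector_derivative [unfolded o_def] | simp)+
  from fundamental_theorem_of_calculus[OF assms(2) this]
  show ?thesis by (simp add: diff_divide_distrib)
qed

lemma has_integral_complex_exp_minus_to_infinity:
  fixes \<mu> :: complex
  assumes "Re \<mu> > 0"
  shows "((\<lambda>x::real. exp (-(\<mu> * of_real x))) has_integral 1/\<mu>) {0..}"
proof -
  have \<mu>0: "\<mu> \<noteq> 0" using assms by auto
  define f where "f k x = (if 0 \<le> x \<and> x \<le> real k then exp (-(\<mu> * of_real x)) else 0)" for k :: nat and x :: real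
  have fk: "(f k has_integral (1 - exp (-(\<mu> * of_nat k)))/\<mu>) {0..}" for k
  proof (rule has_integral_on_superset[where S="{0..real k}"])
    show "(f k has_integral (1 - exp (-(\<mu> * of_nat k)))/\<mu>) {0..real k}"
      using has_integral_complex_exp_minus_interval[OF \<mu>0, of "real k"] by (subst has_integral_cong[where g="\<lambda>x. exp (-(\<mu> * of_real x))"])
        (auto simp: f_def)
  qed (auto simp: f_def)
  have h: "(\<lambda>x::real. exp (- (Re \<mu> * x))) integrable_on {0..}"
    using integrable_on_exp_minus_to_infinity[of "Re \<mu>" 0] assms by simp
  have bound: "\<forall>x\<in>{0..}. norm (f k x) \<le> exp (- (Re \<mu> * x))" for k
    by (auto simp: f_def norm_exp_eq_Re)
  have conv: "\<forall>x\<in>{0..}. (\<lambda>k. f k x) \<longlonglongrightarrow> exp (-(\<mu> * of_real x))"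
  proof
    fix x :: real assume "x \<in> {0..}"
    obtain N :: nat where "x \<le> real N" using real_arch_simple by blast
    then have "\<forall>k\<ge>N. f k x = exp (-(\<mu> * of_real x))"
      using \<open>x \<in> {0..}\<close> by (auto simp: f_def)
    then show "(\<lambda>k. f k x) \<longlonglongrightarrow> exp (-(\<mu> * of_real x))"
      by (intro tendsto_eventually) (auto simp: eventually_sequentially)
  qed
  have "(\<lambda>k::nat. exp (-(\<mu> * of_nat k))) \<longlonglongrightarrow> 0"
  proof (rule tendsto_norm_zero_cancel)
    have "(\<lambda>k::nat. exp (- (Re \<mu> * real k))) \<longlonglongrightarrow> 0"
      using assms by real_asymp
    then show "(\<lambda>k::nat. norm (exp (-(\<mu> * of_nat k)))) \<longlonglongrightarrow> 0"
      by (simp add: norm_exp_eq_Re)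
  qed
  then have "(\<lambda>k::nat. (1 - exp (-(\<mu> * of_nat k)))/\<mu>) \<longlonglongrightarrow> (1 - 0)/\<mu>"
    using \<mu>0 by (intro tendsto_intros)
  then show ?thesis
    using has_integral_dominated_convergence[OF fk h bound conv] by simp
qed

lemma summable_norm_bounded_powser:
  fixes c :: "nat \<Rightarrow> complex"
  assumes "\<And>k. norm (c k) \<le> M" "0 \<le> r" "r < 1"
  shows "summable (\<lambda>k. norm (c k * of_real r ^ k))"
  using Abel_lemma[of r 1 c M] assms by (simp add: norm_mult norm_power)

lemma abel_estimate:
  fixes c :: "nat \<Rightarrow> complex"
  assumes N: "\<forall>k\<ge>N. norm (c k) \<le> e" and M: "\<And>k. norm (c k) \<le> M" and r: "0 \<le> r" "r < 1"
  shows "norm (of_real (1-r) * (\<Sum>k. c k * of_real r ^ k)) \<le> (1-r) * (\<Sum>k<N. norm (c k)) + e"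
proof -
  have sm: "summable (\<lambda>k. norm (c k * of_real r ^ k))"
    by (rule summable_norm_bounded_powser[OF M r])
  have nrm: "norm (c k * of_real r ^ k) = norm (c k) * r ^ k" for k
    using r by (simp add: norm_mult norm_power)
  have e0: "e \<ge> 0" using N norm_ge_zero order_trans by blast
  have "norm (\<Sum>k. c k * of_real r ^ k) \<le> (\<Sum>k. norm (c k * of_real r ^ k))"
    by (rule summable_norm[OF sm])
  also have "\<dots> = (\<Sum>k. norm (c (k+N) * of_real r ^ (k+N))) + (\<Sum>k<N. norm (c k * of_real r ^ k))"
    by (rule suminf_split_initial_segment[OF sm])
  also have "(\<Sum>k<N. norm (c k * of_real r ^ k)) \<le> (\<Sum>k<N. norm (c k))"
    unfolding nrm using r by (intro sum_mono) (auto intro!: mult_left_le power_le_one)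
  also have "(\<Sum>k. norm (c (k+N) * of_real r ^ (k+N))) \<le> (\<Sum>k. e * r ^ k)"
  proof (rule suminf_le)
    show "summable (\<lambda>k. norm (c (k+N) * of_real r ^ (k+N)))"
      using sm by (subst summable_iff_shift)
    show "summable (\<lambda>k. e * r ^ k)" using r by (intro summable_mult summable_geometric) auto
    have "norm (c (k+N)) * r ^ (k+N) \<le> e * r ^ (k+N)" for k
      using N r by (intro mult_right_mono) auto
    also have "e * r ^ (k+N) \<le> e * r ^ k" for k
      using r e0 by (intro mult_left_mono power_decreasing) auto
    finally show "norm (c (k+N) * of_real r ^ (k+N)) \<le> e * r ^ k" for k unfolding nrm .
  qed
  also have "(\<Sum>k. e * r ^ k) = e / (1 - r)"
    using r by (simp add: suminf_mult suminf_geometric divide_simps)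
  finally have "norm (\<Sum>k. c k * of_real r ^ k) \<le> e / (1 - r) + (\<Sum>k<N. norm (c k))"
    by simp
  then have "(1-r) * norm (\<Sum>k. c k * of_real r ^ k) \<le> (1-r) * (e / (1 - r) + (\<Sum>k<N. norm (c k)))"
    using r by (intro mult_left_mono) auto
  also have "\<dots> = (1-r) * (\<Sum>k<N. norm (c k)) + e"
    using r by (simp add: field_simps)
  finally show ?thesis
    using r by (simp add: norm_mult del: of_real_diff)
qed

lemma abel_null_sequentially:
  fixes c :: "nat \<Rightarrow> complex"
  assumes c: "c \<longlonglongrightarrow> 0" and t: "t \<longlonglongrightarrow> 1" "\<And>n. 0 \<le> t n" "\<And>n. t n < 1"
  shows "(\<lambda>n. of_real (1 - t n) * (\<Sum>k. c k * of_real (t n) ^ k)) \<longlonglongrightarrow> 0"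
proof (rule LIMSEQ_I)
  fix e :: real assume e: "e > 0"
  obtain M where M: "\<And>k. norm (c k) \<le> M"
    using convergent_imp_bounded[of c] c unfolding bounded_iff convergent_def by auto
  obtain N where N: "\<forall>k\<ge>N. norm (c k) \<le> e/2"
    using LIMSEQ_D[OF c, of "e/2"] e by (auto intro: less_imp_le)
  define K where "K = (\<Sum>k<N. norm (c k))"
  have "(\<lambda>n. (1 - t n) * K) \<longlonglongrightarrow> (1 - 1) * K"
    by (intro tendsto_intros t)
  then have "\<exists>n0. \<forall>n\<ge>n0. norm ((1 - t n) * K - 0) < e/2"
    using e by (intro LIMSEQ_D) auto
  then obtain n0 where n0: "\<forall>n\<ge>n0. norm ((1 - t n) * K - 0) < e/2" ..
  have "norm (of_real (1 - t n) * (\<Sum>k. c k * of_real (t n) ^ k) - 0) < e" if "n \<ge> n0" for n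
  proof -
    have "(1 - t n) * K < e/2" using n0 that by auto
    with abel_estimate[OF N M t(2,3), of n] show ?thesis unfolding K_def by simp
  qed
  then show "\<exists>n0. \<forall>n\<ge>n0. norm (of_real (1 - t n) * (\<Sum>k. c k * of_real (t n) ^ k) - 0) < e"
    by blast
qed

lemma abel_summation_by_parts:
  fixes a :: "nat \<Rightarrow> complex"
  assumes a: "a sums s" and r: "0 \<le> r" "r < 1"
  shows "(\<Sum>k. a k * of_real r ^ k) - s = of_real (1 - r) * (\<Sum>k. ((\<Sum>i\<le>k. a i) - s) * of_real r ^ k)"
proof -
  define S where "S k = (\<Sum>i\<le>k. a i)" for k
  have "S \<longlonglongrightarrow> s"
    using LIMSEQ_Suc[OF a[unfolded sums_def]] unfolding S_def[abs_def] by (simp add: lessThan_Suc_atMost)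
  then obtain M where M: "\<And>k. norm (S k - s) \<le> M"
    using convergent_imp_bounded[of "\<lambda>k. S k - s"] tendsto_diff[of S s sequentially "\<lambda>_. s" s]
    unfolding bounded_iff convergent_def by auto
  have g: "(\<lambda>k. of_real r ^ k :: complex) sums (1 / (1 - of_real r))"
    using r by (intro geometric_sums) auto
  have sm: "summable (\<lambda>k. S k * of_real r ^ k)"
    using summable_add[OF summable_norm_cancel[OF summable_norm_bounded_powser[OF M r]]
        summable_mult[OF sums_summable[OF g], of s]]
    by (simp add: algebra_simps)
  have shift: "(\<lambda>k. S k * of_real r ^ k - of_real r * (if k = 0 then 0 else S (k - 1) * of_real r ^ (k - 1)))
      sums ((\<Sum>k. S k * of_real r ^ k) - of_real r * (\<Sum>k. S k * of_real r ^ k))"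
  proof (intro sums_diff sums_mult summable_sums sm)
    show "(\<lambda>k. if k = 0 then 0 else S (k - 1) * of_real r ^ (k - 1)) sums (\<Sum>k. S k * of_real r ^ k)"
      using sums_Suc_iff[of "\<lambda>k. if k = 0 then 0 else S (k - 1) * of_real r ^ (k - 1)"]
        summable_sums[OF sm] by simp
  qed
  have "S k * of_real r ^ k - of_real r * (if k = 0 then 0 else S (k - 1) * of_real r ^ (k - 1))
      = a k * of_real r ^ k" for k
    by (cases k) (simp_all add: S_def algebra_simps)
  then have A: "(\<Sum>k. a k * of_real r ^ k) = of_real (1 - r) * (\<Sum>k. S k * of_real r ^ k)"
    using sums_unique[OF shift] by (simp add: algebra_simps)
  have "(\<lambda>k. S k * of_real r ^ k - s * of_real r ^ k) sums
      ((\<Sum>k. S k * of_real r ^ k) - s * (1 / (1 - of_real r)))"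
    by (intro sums_diff summable_sums sm sums_mult g)
  then have B: "(\<Sum>k. (S k - s) * of_real r ^ k) = (\<Sum>k. S k * of_real r ^ k) - s / (1 - of_real r)"
    by (simp add: sums_iff algebra_simps)
  have "(1::complex) - of_real r \<noteq> 0"
    using r by (metis eq_iff_diff_eq_0 less_irrefl of_real_1 of_real_eq_iff)
  then show ?thesis unfolding S_def[symmetric] A B by (simp add: field_simps)
qed

lemma abel_limit_sequentially:
  fixes a :: "nat \<Rightarrow> complex"
  assumes a: "a sums s" and t: "t \<longlonglongrightarrow> 1" "\<And>n. 0 \<le> t n" "\<And>n. t n < 1"
  shows "(\<lambda>n. \<Sum>k. a k * of_real (t n) ^ k) \<longlonglongrightarrow> s"
proof -
  have "(\<lambda>k. \<Sum>i\<le>k. a i) \<longlonglongrightarrow> s"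
    using LIMSEQ_Suc[OF a[unfolded sums_def]] by (simp add: lessThan_Suc_atMost)
  then have "(\<lambda>k. (\<Sum>i\<le>k. a i) - s) \<longlonglongrightarrow> 0"
    using tendsto_diff[OF _ tendsto_const[of s]] by fastforce
  from abel_null_sequentially[OF this t]
  have "(\<lambda>n. (\<Sum>k. a k * of_real (t n) ^ k) - s) \<longlonglongrightarrow> 0"
    by (simp add: abel_summation_by_parts[OF a t(2,3)])
  from tendsto_add[OF this tendsto_const[of s]] show ?thesis by simp
qed

lemma sums_of_pair_sums:
  fixes a :: "nat \<Rightarrow> 'a::real_normed_vector"
  assumes b: "(\<lambda>j. a (2*j) + a (2*j+1)) sums S" and a0: "a \<longlonglongrightarrow> 0"
  shows "a sums S"
proof -
  define P where "P n = (\<Sum>i<n. a i)" for n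
  have P2: "P (2*j) = (\<Sum>i<j. a (2*i) + a (2*i+1))" for j
    by (induction j) (simp_all add: P_def)
  have PS: "(\<lambda>j. P (2*j)) \<longlonglongrightarrow> S" using b unfolding sums_def P2 .
  show ?thesis unfolding sums_def P_def[symmetric]
  proof (rule LIMSEQ_I)
    fix e :: real assume e: "e > 0"
    obtain J1 where J1: "\<forall>j\<ge>J1. norm (P (2*j) - S) < e/2" using LIMSEQ_D[OF PS, of "e/2"] e by auto
    obtain J2 where J2: "\<forall>n\<ge>J2. norm (a n - 0) < e/2" using LIMSEQ_D[OF a0, of "e/2"] e by auto
    show "\<exists>no. \<forall>n\<ge>no. norm (P n - S) < e"
    proof (intro exI allI impI)
      fix n assume n: "2 * J1 + J2 + 1 \<le> n"
      define j where "j = n div 2"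
      have j: "j \<ge> J1" using n by (simp add: j_def)
      show "norm (P n - S) < e"
      proof (cases "even n")
        case True
        then have "n = 2*j" by (simp add: j_def)
        then show ?thesis using J1 j e by auto
      next
        case False
        then have nj: "n = 2*j + 1" by (simp add: j_def)
        have "P n - S = (P (2*j) - S) + a (2*j)" unfolding nj by (simp add: P_def)
        then have "norm (P n - S) \<le> norm (P (2*j) - S) + norm (a (2*j))"
          by (simp only: norm_triangle_ineq)
        moreover have "2*j \<ge> J2" using n nj by linarith
        moreover have "norm (a (2*j)) < e/2" using J2 \<open>2*j \<ge> J2\<close> by auto
        ultimately show ?thesis using J1 j by fastforce
      qed
    qed
  qed
qed

lemma exp_shift_as_power:
  fixes m c X :: complex
  shows "exp (-((m + 2 * of_nat k * c) * X)) = exp (-2*c*X) ^ k * exp (-(m*X))"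
proof -
  have "exp (-2*c*X) ^ k * exp (-(m*X)) = exp (of_nat k * (-2*c*X) + -(m*X))"
    by (simp only: exp_of_nat_mult exp_add)
  also have "of_nat k * (-2*c*X) + -(m*X) = -((m + 2 * of_nat k * c) * X)"
    by (simp add: algebra_simps)
  finally show ?thesis by simp
qed

lemma exp_sinh_cosh_expansion:
  fixes a b V X :: complex
  shows "exp (-(V*X)) * (sinh (a*X) * cosh (b*X)) =
     (exp (-((V-a-b)*X)) + exp (-((V-a+b)*X)) - exp (-((V+a-b)*X)) - exp (-((V+a+b)*X))) / 4"
proof -
  have e: "exp (-((V+p+q)*X)) = exp (-(V*X)) * exp (-(p*X)) * exp (-(q*X))" for p q
    by (simp add: exp_add[symmetric] algebra_simps)
  show ?thesis
    using e[of "-a" "-b"] e[of "-a" "b"] e[of "a" "-b"] e[of "a" "b"]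
    by (simp add: sinh_def cosh_def field_simps)
qed

lemma summable_norm_gbinomial:
  fixes u :: complex
  assumes "0 \<le> r" "r < 1"
  shows "summable (\<lambda>k. norm (u gchoose k) * r ^ k)"
proof -
  define r0 where "r0 = (1 + r) / 2"
  have r0: "r < r0" "r0 < 1" "0 \<le> r0" using assms by (auto simp: r0_def)
  have "(\<lambda>n. (u gchoose n) * of_real r0 ^ n) sums (1 + of_real r0) powr u"
    using r0 by (intro gen_binomial_complex) auto
  then have "(\<lambda>n. (u gchoose n) * of_real r0 ^ n) \<longlonglongrightarrow> 0"
    using summable_LIMSEQ_zero sums_summable by blast
  then obtain M where M: "\<And>n. norm ((u gchoose n) * of_real r0 ^ n) \<le> M"
    using convergent_imp_bounded[of "\<lambda>n. (u gchoose n) * of_real r0 ^ n"]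
    unfolding bounded_iff convergent_def by auto
  show ?thesis
    by (rule Abel_lemma[OF assms(1) r0(1), of _ M]) (use M r0 in \<open>simp add: norm_mult norm_power\<close>)
qed

lemma norm_add_diff_diff_le:
  fixes p q r t :: "'a::real_normed_vector"
  shows "norm (p + q - r - t) \<le> norm p + norm q + norm r + norm t"
  by (smt (verit) norm_triangle_ineq norm_triangle_ineq4)

lemma sinh_cosh_div_cosh_pow:
  "sinh (a * complex_of_real x) * cosh (b * complex_of_real x) / cosh_pow v c x =
   2 powr v * ((1 + exp (-2 * c * complex_of_real x)) powr (-v) *
   (exp (-(v * c * complex_of_real x)) * (sinh (a * complex_of_real x) * cosh (b * complex_of_real x))))"
  unfolding cosh_pow_def powr_minus exp_minus
  by (simp add: divide_inverse inverse_mult_distrib mult_ac)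

text \<open>
  Up to a constant factor, the \<open>k\<close>-th term of the \<open>7F6\<close> series divided by \<open>(v)\<^sub>k/k!\<close>
  is \<open>sq_ratio\<close> at \<open>m = k + v/2\<close>; it behaves like \<open>1/m^2\<close> with increments \<open>O(1/m^3)\<close>.
\<close>

definition sq_ratio :: "complex \<Rightarrow> complex \<Rightarrow> complex \<Rightarrow> complex \<Rightarrow> complex" where
  "sq_ratio \<alpha> \<beta> \<gamma> m = (m^2 - \<gamma>^2) / ((m^2 - \<alpha>^2) * (m^2 - \<beta>^2))"

definition sq_ratio_remainder :: "complex \<Rightarrow> complex \<Rightarrow> complex \<Rightarrow> complex \<Rightarrow> complex" where
  "sq_ratio_remainder \<alpha> \<beta> \<gamma> m =
     m^2 * ((\<alpha>^2 + \<beta>^2 - \<gamma>^2) * m^2 - \<alpha>^2 * \<beta>^2) / ((m^2 - \<alpha>^2) * (m^2 - \<beta>^2))"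

lemma norm_square_diff_ge:
  fixes m \<alpha> :: complex
  assumes "norm m \<ge> 2 * norm \<alpha>"
  shows "norm (m^2 - \<alpha>^2) \<ge> norm m ^ 2 / 2"
proof -
  have "norm (m^2) \<le> norm (m^2 - \<alpha>^2) + norm (\<alpha>^2)"
    using norm_triangle_ineq[of "m^2 - \<alpha>^2" "\<alpha>^2"] by simp
  moreover have "norm \<alpha> ^ 2 \<le> (norm m / 2) ^ 2" using assms by (intro power_mono) auto
  ultimately have "norm m ^ 2 \<le> norm (m^2 - \<alpha>^2) + norm \<alpha> ^ 2" "norm \<alpha> ^ 2 * 4 \<le> norm m ^ 2"
    by (simp_all add: norm_power power_divide)
  then show ?thesis using zero_le_power2[of "norm m"] by linarith
qed

lemma sq_ratio_expansion:
  assumes m: "m \<noteq> 0" and "m^2 - \<alpha>^2 \<noteq> 0" "m^2 - \<beta>^2 \<noteq> 0"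
  shows "sq_ratio \<alpha> \<beta> \<gamma> m = 1 / m^2 + sq_ratio_remainder \<alpha> \<beta> \<gamma> m / m^4"
proof -
  define P where "P = (m^2 - \<alpha>^2) * (m^2 - \<beta>^2)"
  define X where "X = (\<alpha>^2 + \<beta>^2 - \<gamma>^2) * m^2 - \<alpha>^2 * \<beta>^2"
  have P: "P \<noteq> 0" using assms by (simp add: P_def)
  have e: "sq_ratio \<alpha> \<beta> \<gamma> m = (m^2 - \<gamma>^2) / P" "sq_ratio_remainder \<alpha> \<beta> \<gamma> m = m^2 * X / P"
    unfolding sq_ratio_def sq_ratio_remainder_def P_def X_def by simp_all
  have Q: "(m^2 - \<gamma>^2) * m^2 = P + X" unfolding P_def X_def by algebra
  have "1 / m^2 + m^2 * X / P / m^4 = (P + X) / (m^2 * P)"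
    using P m by (simp add: field_simps power4_eq_xxxx power2_eq_square)
  also have "\<dots> = (m^2 - \<gamma>^2) / P" unfolding Q[symmetric] using m by simp
  finally show ?thesis unfolding e by simp
qed

lemma norm_sq_ratio_remainder_le:
  assumes m: "norm m \<ge> 1" "norm m \<ge> 2 * norm \<alpha>" "norm m \<ge> 2 * norm \<beta>"
  shows "norm (sq_ratio_remainder \<alpha> \<beta> \<gamma> m) \<le> 4 * (norm (\<alpha>^2 + \<beta>^2 - \<gamma>^2) + norm (\<alpha>^2 * \<beta>^2))"
proof -
  define n where "n = norm m"
  define A1 where "A1 = norm (\<alpha>^2 + \<beta>^2 - \<gamma>^2)"
  define A2 where "A2 = norm (\<alpha>^2 * \<beta>^2)"
  have n1: "n \<ge> 1" using m by (simp add: n_def)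
  have d1: "norm (m^2 - \<alpha>^2) \<ge> n^2/2" using norm_square_diff_ge[OF m(2)] by (simp add: n_def)
  have d2: "norm (m^2 - \<beta>^2) \<ge> n^2/2" using norm_square_diff_ge[OF m(3)] by (simp add: n_def)
  have den: "norm ((m^2 - \<alpha>^2) * (m^2 - \<beta>^2)) \<ge> n^4/4"
  proof -
    have "n^2/2 * (n^2/2) \<le> norm (m^2 - \<alpha>^2) * norm (m^2 - \<beta>^2)"
      using d1 d2 by (intro mult_mono) auto
    then show ?thesis by (simp add: norm_mult power4_eq_xxxx power2_eq_square)
  qed
  have num: "norm (m^2 * ((\<alpha>^2 + \<beta>^2 - \<gamma>^2) * m^2 - \<alpha>^2 * \<beta>^2)) \<le> n^4 * (A1 + A2)"
  proof -
    have "norm ((\<alpha>^2 + \<beta>^2 - \<gamma>^2) * m^2 - \<alpha>^2 * \<beta>^2) \<le> A1 * n^2 + A2"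
      using norm_triangle_ineq4[of "(\<alpha>^2 + \<beta>^2 - \<gamma>^2) * m^2" "\<alpha>^2 * \<beta>^2"]
      by (simp add: A1_def A2_def n_def norm_mult norm_power)
    also have "\<dots> \<le> A1 * n^2 + A2 * n^2"
    proof -
      have "A2 * 1 \<le> A2 * n^2" using n1 by (intro mult_left_mono) (auto simp: A2_def intro: one_le_power)
      then show ?thesis by simp
    qed
    finally have "norm ((\<alpha>^2 + \<beta>^2 - \<gamma>^2) * m^2 - \<alpha>^2 * \<beta>^2) \<le> n^2 * (A1 + A2)"
      by (simp add: algebra_simps)
    then have "n^2 * norm ((\<alpha>^2 + \<beta>^2 - \<gamma>^2) * m^2 - \<alpha>^2 * \<beta>^2) \<le> n^2 * (n^2 * (A1 + A2))"
      by (intro mult_left_mono) auto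
    then show ?thesis by (simp add: norm_mult norm_power n_def power4_eq_xxxx power2_eq_square mult.assoc)
  qed
  have np: "n^4 > 0" using n1 by simp
  have "norm (sq_ratio_remainder \<alpha> \<beta> \<gamma> m) = norm (m^2 * ((\<alpha>^2 + \<beta>^2 - \<gamma>^2) * m^2 - \<alpha>^2 * \<beta>^2)) / norm ((m^2 - \<alpha>^2) * (m^2 - \<beta>^2))"
    unfolding sq_ratio_remainder_def by (simp add: norm_divide)
  also have "\<dots> \<le> (n^4 * (A1 + A2)) / (n^4/4)"
    using num den np by (intro frac_le) (auto simp: A1_def A2_def)
  also have "\<dots> = 4 * (A1 + A2)" using np by (simp add: field_simps)
  finally show ?thesis by (simp add: A1_def A2_def)
qed

definition "sq_ratio_bound \<alpha> \<beta> \<gamma> = norm (\<alpha>^2 + \<beta>^2 - \<gamma>^2) + norm (\<alpha>^2 * \<beta>^2)"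

definition "sq_ratio_threshold (\<alpha>::complex) \<beta> = 2 + 2 * norm \<alpha> + 2 * norm \<beta>"

lemma sq_ratio_threshold_le:
  "norm m \<ge> sq_ratio_threshold \<alpha> \<beta> \<Longrightarrow> norm m \<ge> 2 \<and> norm m \<ge> 2 * norm \<alpha> \<and> norm m \<ge> 2 * norm \<beta>"
  unfolding sq_ratio_threshold_def using norm_ge_zero[of \<alpha>] norm_ge_zero[of \<beta>] by linarith

lemma sq_ratio_bound_nonneg: "sq_ratio_bound \<alpha> \<beta> \<gamma> \<ge> 0"
  unfolding sq_ratio_bound_def by simp

lemma sq_ratio_large:
  assumes "norm m \<ge> sq_ratio_threshold \<alpha> \<beta>"
  shows "sq_ratio \<alpha> \<beta> \<gamma> m = 1 / m^2 + sq_ratio_remainder \<alpha> \<beta> \<gamma> m / m^4"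
    and "norm (sq_ratio_remainder \<alpha> \<beta> \<gamma> m) \<le> 4 * sq_ratio_bound \<alpha> \<beta> \<gamma>"
proof -
  note K = sq_ratio_threshold_le[OF assms]
  have m0: "m \<noteq> 0" using K by auto
  have "norm (m^2 - \<alpha>^2) \<ge> norm m ^ 2 / 2" using norm_square_diff_ge K by blast
  moreover have "norm m ^ 2 / 2 > 0" using m0 by simp
  ultimately have a: "m^2 - \<alpha>^2 \<noteq> 0" by auto
  have "norm (m^2 - \<beta>^2) \<ge> norm m ^ 2 / 2" using norm_square_diff_ge K by blast
  then have b: "m^2 - \<beta>^2 \<noteq> 0" using \<open>norm m ^ 2 / 2 > 0\<close> by auto
  show "sq_ratio \<alpha> \<beta> \<gamma> m = 1 / m^2 + sq_ratio_remainder \<alpha> \<beta> \<gamma> m / m^4" by (rule sq_ratio_expansion[OF m0 a b])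
  show "norm (sq_ratio_remainder \<alpha> \<beta> \<gamma> m) \<le> 4 * sq_ratio_bound \<alpha> \<beta> \<gamma>" unfolding sq_ratio_bound_def using K by (intro norm_sq_ratio_remainder_le) auto
qed

lemma norm_sq_ratio_remainder_div_le:
  assumes "norm m \<ge> sq_ratio_threshold \<alpha> \<beta>"
  shows "norm (sq_ratio_remainder \<alpha> \<beta> \<gamma> m / m^4) \<le> 4 * sq_ratio_bound \<alpha> \<beta> \<gamma> / norm m ^ 4"
  unfolding norm_divide norm_power
  using sq_ratio_large(2)[OF assms] sq_ratio_threshold_le[OF assms] by (intro divide_right_mono) auto

lemma norm_inverse_square_diff_le:
  fixes m :: complex
  assumes "norm m \<ge> 2"
  shows "norm (1 / m^2 - 1 / (m + 1)^2) \<le> 12 / norm m ^ 3"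
proof -
  define n where "n = norm m"
  have "n - 1 \<le> norm (m + 1)"
    using norm_diff_ineq[of m 1] by (simp add: n_def)
  then have n': "norm (m + 1) \<ge> n / 2" and n0: "n > 0" using assms by (auto simp: n_def)
  then have m0: "m \<noteq> 0" "m + 1 \<noteq> 0" by (auto simp: n_def)
  have "norm (2*m+1) \<le> 2 * n + 1" using norm_triangle_ineq[of "2*m" 1] by (simp add: n_def norm_mult)
  also have "\<dots> \<le> 3 * n" using assms by (simp add: n_def)
  finally have num: "norm (2*m+1) \<le> 3 * n" .
  have den: "n^2 * (n/2)^2 \<le> n^2 * norm (m + 1)^2" using n' n0 by (intro mult_left_mono power_mono) auto
  have "1 / m^2 - 1 / (m+1)^2 = (2*m+1) / (m^2 * (m+1)^2)"
    using m0 by (simp add: divide_simps) (simp add: algebra_simps power2_eq_square)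
  then have "norm (1 / m^2 - 1 / (m + 1)^2) = norm (2*m+1) / (n^2 * norm (m + 1)^2)"
    by (simp add: norm_divide norm_mult norm_power n_def)
  also have "\<dots> \<le> (3 * n) / (n^2 * (n/2)^2)"
    using num den n0 by (intro frac_le) auto
  also have "\<dots> = 12 / n^3" using n0 by (simp add: field_simps power2_eq_square power3_eq_cube)
  finally show ?thesis by (simp add: n_def)
qed

lemma norm_sq_ratio_le:
  assumes "norm m \<ge> sq_ratio_threshold \<alpha> \<beta>"
  shows "norm (sq_ratio \<alpha> \<beta> \<gamma> m) \<le> (1 + 4 * sq_ratio_bound \<alpha> \<beta> \<gamma>) / norm m ^ 2"
proof -
  define n where "n = norm m"
  have n1: "n \<ge> 1" using sq_ratio_threshold_le[OF assms] by (simp add: n_def)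
  have "norm (sq_ratio \<alpha> \<beta> \<gamma> m) \<le> norm (1 / m^2) + norm (sq_ratio_remainder \<alpha> \<beta> \<gamma> m / m^4)"
    unfolding sq_ratio_large(1)[OF assms] by (rule norm_triangle_ineq)
  also have "norm (sq_ratio_remainder \<alpha> \<beta> \<gamma> m / m^4) \<le> 4 * sq_ratio_bound \<alpha> \<beta> \<gamma> / n^4"
    unfolding n_def by (rule norm_sq_ratio_remainder_div_le[OF assms])
  also have "4 * sq_ratio_bound \<alpha> \<beta> \<gamma> / n^4 \<le> 4 * sq_ratio_bound \<alpha> \<beta> \<gamma> / n^2"
    using n1 sq_ratio_bound_nonneg[of \<alpha> \<beta> \<gamma>] by (intro divide_left_mono power_increasing) auto
  finally show ?thesis by (simp add: n_def norm_divide norm_power add_divide_distrib)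
qed

lemma norm_sq_ratio_diff_le:
  assumes "norm m \<ge> sq_ratio_threshold \<alpha> \<beta> + 1"
  shows "norm (sq_ratio \<alpha> \<beta> \<gamma> m - sq_ratio \<alpha> \<beta> \<gamma> (m + 1)) \<le> (12 + 68 * sq_ratio_bound \<alpha> \<beta> \<gamma>) / norm m ^ 3"
proof -
  define n where "n = norm m"
  define A where "A = sq_ratio_bound \<alpha> \<beta> \<gamma>"
  have A0: "A \<ge> 0" using sq_ratio_bound_nonneg by (simp add: A_def)
  have a1: "norm m \<ge> sq_ratio_threshold \<alpha> \<beta>" using assms by simp
  have n2: "n \<ge> 2" using sq_ratio_threshold_le[OF a1] by (simp add: n_def)
  have "n - 1 \<le> norm (m + 1)" using norm_diff_ineq[of m 1] by (simp add: n_def)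
  then have a2: "norm (m + 1) \<ge> sq_ratio_threshold \<alpha> \<beta>" and n': "norm (m + 1) \<ge> n / 2"
    using assms n2 by (auto simp: n_def)
  have "norm (sq_ratio_remainder \<alpha> \<beta> \<gamma> m / m^4) \<le> 4 * A / n^4"
    unfolding n_def A_def by (rule norm_sq_ratio_remainder_div_le[OF a1])
  also have "\<dots> \<le> 4 * A / n^3" using n2 A0 by (intro divide_left_mono power_increasing) auto
  finally have t2: "norm (sq_ratio_remainder \<alpha> \<beta> \<gamma> m / m^4) \<le> 4 * A / n^3" .
  have "norm (sq_ratio_remainder \<alpha> \<beta> \<gamma> (m+1) / (m+1)^4) \<le> 4 * A / norm (m + 1) ^ 4"
    unfolding A_def by (rule norm_sq_ratio_remainder_div_le[OF a2])
  also have "\<dots> \<le> 4 * A / (n/2)^4" using n' n2 A0 by (intro frac_le power_mono) auto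
  also have "\<dots> \<le> 64 * A / n^3" using n2 A0 by (simp add: field_simps power_divide) (intro mult_left_mono power_increasing, auto)
  finally have t3: "norm (sq_ratio_remainder \<alpha> \<beta> \<gamma> (m+1) / (m+1)^4) \<le> 64 * A / n^3" .
  have eq: "sq_ratio \<alpha> \<beta> \<gamma> m - sq_ratio \<alpha> \<beta> \<gamma> (m + 1) = (1 / m^2 - 1 / (m + 1)^2)
      + (sq_ratio_remainder \<alpha> \<beta> \<gamma> m / m^4 - sq_ratio_remainder \<alpha> \<beta> \<gamma> (m+1) / (m+1)^4)"
    unfolding sq_ratio_large(1)[OF a1] sq_ratio_large(1)[OF a2] by (simp add: algebra_simps)
  have "norm (sq_ratio \<alpha> \<beta> \<gamma> m - sq_ratio \<alpha> \<beta> \<gamma> (m + 1)) \<le> norm (1 / m^2 - 1 / (m + 1)^2)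
      + (norm (sq_ratio_remainder \<alpha> \<beta> \<gamma> m / m^4) + norm (sq_ratio_remainder \<alpha> \<beta> \<gamma> (m+1) / (m+1)^4))"
    unfolding eq by (intro order.trans[OF norm_triangle_ineq] add_left_mono norm_triangle_ineq4)
  also have "\<dots> \<le> 12 / n^3 + (4 * A / n^3 + 64 * A / n^3)"
    using norm_inverse_square_diff_le[of m] n2 t2 t3 unfolding n_def by linarith
  also have "\<dots> = (12 + 68 * A) / n^3" by (simp add: add_divide_distrib)
  finally show ?thesis by (simp add: n_def A_def)
qed

lemma sq_ratio_decay:
  "\<exists>C K. C \<ge> 0 \<and> K \<ge> 0 \<and>
    (\<forall>m. norm m \<ge> K \<longrightarrow> norm (sq_ratio \<alpha> \<beta> \<gamma> m) \<le> C / norm m ^ 2) \<and>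
    (\<forall>m. norm m \<ge> K + 1 \<longrightarrow> norm (sq_ratio \<alpha> \<beta> \<gamma> m - sq_ratio \<alpha> \<beta> \<gamma> (m + 1)) \<le> C / norm m ^ 3)"
proof (intro exI conjI allI impI)
  define A where "A = sq_ratio_bound \<alpha> \<beta> \<gamma>"
  have A: "A \<ge> 0" unfolding A_def by (rule sq_ratio_bound_nonneg)
  show "12 + 68 * A \<ge> 0" using A by simp
  show "sq_ratio_threshold \<alpha> \<beta> \<ge> 0" unfolding sq_ratio_threshold_def by simp
  show "norm (sq_ratio \<alpha> \<beta> \<gamma> m) \<le> (12 + 68 * A) / norm m ^ 2" if "norm m \<ge> sq_ratio_threshold \<alpha> \<beta>" for m
    using A by (intro order.trans[OF norm_sq_ratio_le[OF that]] divide_right_mono)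
      (auto simp: A_def)
  show "norm (sq_ratio \<alpha> \<beta> \<gamma> m - sq_ratio \<alpha> \<beta> \<gamma> (m + 1)) \<le> (12 + 68 * A) / norm m ^ 3"
    if "norm m \<ge> sq_ratio_threshold \<alpha> \<beta> + 1" for m
    using norm_sq_ratio_diff_le[OF that] unfolding A_def .
qed

lemma norm_nat_plus_half_ge:
  fixes v :: complex and K :: real
  assumes "K \<ge> 0" "real k \<ge> 2 * K + 2 + norm v"
  shows "norm (of_nat k + v/2) \<ge> real k / 2" "norm (of_nat k + v/2) \<ge> K + 1"
    "norm (of_nat k + v/2 + 1) \<ge> real k / 2" "norm (of_nat k + v/2 + 1) \<ge> K"
proof -
  have "norm (of_nat k + v/2) \<ge> real k - norm v / 2"
    using norm_diff_ineq[of "of_nat k :: complex" "v/2"] by (simp add: norm_divide)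
  moreover have "norm (of_nat (Suc k) + v/2) \<ge> real (Suc k) - norm v / 2"
    using norm_diff_ineq[of "of_nat (Suc k) :: complex" "v/2"] by (simp only: norm_of_nat norm_divide) simp
  then have "norm (of_nat k + v/2 + 1) \<ge> real k + 1 - norm v / 2" by (simp add: ac_simps)
  ultimately show "norm (of_nat k + v/2) \<ge> real k / 2" "norm (of_nat k + v/2) \<ge> K + 1"
    "norm (of_nat k + v/2 + 1) \<ge> real k / 2" "norm (of_nat k + v/2 + 1) \<ge> K"
    using assms norm_ge_zero[of v] by linarith+
qed

lemma norm_divide_Suc_mult_le:
  fixes u y :: complex
  assumes k: "real k \<ge> 2" and y: "norm y \<le> B / real k ^ 2"
  shows "norm (u / (of_nat k + 1) * y) \<le> norm u * B / real k ^ 3"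
proof -
  have "norm (of_nat k + 1 :: complex) = real k + 1"
    by (metis norm_of_nat of_nat_Suc add.commute)
  then have "norm (u / (of_nat k + 1)) \<le> norm u / real k"
    unfolding norm_divide using k by (intro frac_le) auto
  then have "norm (u / (of_nat k + 1)) * norm y \<le> norm u / real k * (B / real k ^ 2)"
    using y by (intro mult_mono) auto
  also have "\<dots> = norm u * B / real k ^ 3"
    by (simp add: power3_eq_cube power2_eq_square)
  finally show ?thesis by (simp only: norm_mult)
qed

lemma powr_le_mult_powr_plus_one:
  fixes n t :: real
  assumes "n \<ge> 1"
  shows "n powr t \<le> (1 + 2 powr (-t)) * (n+1) powr t"
proof (cases "t \<ge> 0")
  case True
  have "n powr t \<le> (n+1) powr t" using assms True by (intro powr_mono2) auto
  also have "\<dots> \<le> (1 + 2 powr (-t)) * (n+1) powr t" by (simp add: add_increasing2 mult_le_cancel_right1)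
  finally show ?thesis .
next
  case False
  have "n powr t \<le> ((n+1)/2) powr t" using assms False by (intro powr_mono2') auto
  also have "\<dots> = 2 powr (-t) * (n+1) powr t" using assms by (simp add: powr_divide powr_minus divide_simps)
  also have "\<dots> \<le> (1 + 2 powr (-t)) * (n+1) powr t" by (intro mult_right_mono) auto
  finally show ?thesis .
qed

lemma norm_pochhammer_over_fact_le:
  fixes v :: complex
  shows "\<exists>M. \<forall>k\<ge>1. norm (pochhammer v k / fact k) \<le> M * real k powr (Re v - 1)"
proof -
  obtain M0 where M0: "\<And>n. norm (rGamma_series v n) \<le> M0"
    using convergent_imp_bounded[of "rGamma_series v"] rGamma_series_LIMSEQ[of v]
    unfolding bounded_iff convergent_def by auto
  define M where "M = max (norm v) (M0 * (1 + 2 powr (- Re v)))"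
  show ?thesis
  proof (intro exI[of _ M] allI impI)
    fix k :: nat assume k: "k \<ge> 1"
    show "norm (pochhammer v k / fact k) \<le> M * real k powr (Re v - 1)"
    proof (cases "k = 1")
      case True then show ?thesis by (simp add: M_def)
    next
      case False
      then obtain n where kn: "k = n + 1" "n \<ge> 1" using k False by (intro that[of "k - 1"]) auto
      have e: "norm (exp (v * of_real (ln (of_nat n)))) = real n powr Re v"
        using kn by (simp add: norm_exp_eq_Re powr_def)
      have "norm (pochhammer v (n+1)) = norm (rGamma_series v n) * (fact n * real n powr Re v)"
        using kn e unfolding rGamma_series_def by (simp add: norm_divide norm_mult)
      also have "\<dots> \<le> M0 * (fact n * real n powr Re v)"
        by (intro mult_right_mono M0) auto
      finally have p: "norm (pochhammer v (n+1)) \<le> M0 * (fact n * real n powr Re v)" .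
      have M00: "M0 \<ge> 0" using M0[of 0] norm_ge_zero order.trans by blast
      have f: "norm (fact k :: complex) = fact n * (real n + 1)" unfolding kn norm_fact by (simp add: algebra_simps)
      have "norm (pochhammer v k / fact k) = norm (pochhammer v (n+1)) / (fact n * (real n + 1))"
        unfolding norm_divide f using kn by simp
      also have "\<dots> \<le> M0 * (fact n * real n powr Re v) / (fact n * (real n + 1))"
        using p by (intro divide_right_mono) auto
      also have "\<dots> = M0 * real n powr Re v / (real n + 1)" by simp
      also have "\<dots> \<le> M0 * ((1 + 2 powr (- Re v)) * (real n + 1) powr Re v) / (real n + 1)"
        using powr_le_mult_powr_plus_one[of "real n" "Re v"] kn M00 by (intro divide_right_mono mult_left_mono) auto
      also have "\<dots> = (M0 * (1 + 2 powr (- Re v))) * ((real n + 1) powr Re v / (real n + 1))" by simp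
      also have "(real n + 1) powr Re v / (real n + 1) = real k powr (Re v - 1)"
        using kn by (simp add: powr_diff add.commute)
      also have "(M0 * (1 + 2 powr (- Re v))) * real k powr (Re v - 1) \<le> M * real k powr (Re v - 1)"
        by (intro mult_right_mono) (auto simp: M_def)
      finally show ?thesis .
    qed
  qed
qed

lemma sinh_cosh_partial_fractions:
  fixes l a b :: complex
  assumes "l - a - b \<noteq> 0" "l - a + b \<noteq> 0" "l + a - b \<noteq> 0" "l + a + b \<noteq> 0"
  shows "(1/(l - a - b) + 1/(l - a + b) - 1/(l + a - b) - 1/(l + a + b)) / 4
       = a * (l^2 - a^2 + b^2) / ((l - a - b) * (l - a + b) * (l + a - b) * (l + a + b))"
proof -
  define d1 where "d1 = l - a - b"
  define d2 where "d2 = l - a + b"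
  define d3 where "d3 = l + a - b"
  define d4 where "d4 = l + a + b"
  have nz: "d1 \<noteq> 0" "d2 \<noteq> 0" "d3 \<noteq> 0" "d4 \<noteq> 0" using assms by (simp_all add: d1_def d2_def d3_def d4_def)
  have "(1/d1 + 1/d2 - 1/d3 - 1/d4) / 4 = (d2*d3*d4 + d1*d3*d4 - d1*d2*d4 - d1*d2*d3) / (4 * (d1*d2*d3*d4))"
    using nz by (simp add: field_simps)
  also have "d2*d3*d4 + d1*d3*d4 - d1*d2*d4 - d1*d2*d3 = 4 * (a * (l^2 - a^2 + b^2))"
    unfolding d1_def d2_def d3_def d4_def by algebra
  finally show ?thesis unfolding d1_def[symmetric] d2_def[symmetric] d3_def[symmetric] d4_def[symmetric]
    using nz by simp
qed

lemma pochhammer_one_plus_ratio: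
  fixes z :: complex
  shows "z * pochhammer (1 + z) k = pochhammer z k * (z + of_nat k)"
  using pochhammer_rec[of z k] pochhammer_Suc[of z k] by (simp add: add.commute)

locale cosh_power_integral =
  fixes v a b c :: complex
  assumes Re_c_pos: "Re c > 0"
    and Re_pos: "Re (v * c + a + b) > 0" "Re (v * c + a - b) > 0"
      "Re (v * c - a + b) > 0" "Re (v * c - a - b) > 0"
begin

definition "\<mu>1 = v * c - a - b"
definition "\<mu>2 = v * c - a + b"
definition "\<mu>3 = v * c + a - b"
definition "\<mu>4 = v * c + a + b"

definition "w x = exp (-2 * c * complex_of_real x)"

definition "damped x =
  exp (-(v * c * complex_of_real x)) * (sinh (a * complex_of_real x) * cosh (b * complex_of_real x))"

definition "J k = (1/(\<mu>1 + 2 * of_nat k * c) + 1/(\<mu>2 + 2 * of_nat k * c)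
  - 1/(\<mu>3 + 2 * of_nat k * c) - 1/(\<mu>4 + 2 * of_nat k * c)) / 4"

definition "majorant x =
  (exp (-(Re \<mu>1 * x)) + exp (-(Re \<mu>2 * x)) + exp (-(Re \<mu>3 * x)) + exp (-(Re \<mu>4 * x))) / 4"

lemma Re_\<mu>_pos: "Re \<mu>1 > 0" "Re \<mu>2 > 0" "Re \<mu>3 > 0" "Re \<mu>4 > 0"
  using Re_pos by (auto simp: \<mu>1_def \<mu>2_def \<mu>3_def \<mu>4_def)

lemma Re_shift_pos: "Re m > 0 \<Longrightarrow> Re (m + 2 * of_nat k * c) > 0"
  using Re_c_pos by (simp add: add_pos_nonneg)

lemma damped_expansion: "damped x = (exp (-(\<mu>1 * complex_of_real x)) + exp (-(\<mu>2 * complex_of_real x))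
     - exp (-(\<mu>3 * complex_of_real x)) - exp (-(\<mu>4 * complex_of_real x))) / 4"
  unfolding damped_def \<mu>1_def \<mu>2_def \<mu>3_def \<mu>4_def by (rule exp_sinh_cosh_expansion)

lemma has_integral_w_power_damped: "((\<lambda>x. w x ^ k * damped x) has_integral J k) {0..}"
proof -
  have i: "((\<lambda>x::real. exp (-((m + 2 * of_nat k * c) * of_real x)))
      has_integral 1/(m + 2 * of_nat k * c)) {0..}" if "Re m > 0" for m
    by (rule has_integral_complex_exp_minus_to_infinity[OF Re_shift_pos[OF that]])
  have eq: "w x ^ k * damped x =
      (exp (-((\<mu>1 + 2 * of_nat k * c) * of_real x)) + exp (-((\<mu>2 + 2 * of_nat k * c) * of_real x))
     - exp (-((\<mu>3 + 2 * of_nat k * c) * of_real x)) - exp (-((\<mu>4 + 2 * of_nat k * c) * of_real x))) / 4"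
    for x
    unfolding damped_expansion exp_shift_as_power w_def by (simp add: field_simps)
  have "((\<lambda>x. (exp (-((\<mu>1 + 2 * of_nat k * c) * of_real x))
      + exp (-((\<mu>2 + 2 * of_nat k * c) * of_real x)) - exp (-((\<mu>3 + 2 * of_nat k * c) * of_real x))
      - exp (-((\<mu>4 + 2 * of_nat k * c) * of_real x))) / 4) has_integral J k) {0..}"
    unfolding J_def by (intro has_integral_divide has_integral_diff has_integral_add i Re_\<mu>_pos)
  then show ?thesis by (simp only: eq[symmetric])
qed

lemma integrable_majorant: "majorant integrable_on {0..}"
proof -
  have i: "(\<lambda>x::real. exp (-(Re m * x))) integrable_on {0..}" if "Re m > 0" for m
    using integrable_on_exp_minus_to_infinity[of "Re m" 0] that by simp
  have "(\<lambda>x. (exp (-(Re \<mu>1 * x)) + exp (-(Re \<mu>2 * x)) + exp (-(Re \<mu>3 * x)) + exp (-(Re \<mu>4 * x)))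
      * (1/4)) integrable_on {0..}"
    by (intro integrable_on_mult_left integrable_add i Re_\<mu>_pos)
  then show ?thesis unfolding majorant_def by simp
qed

lemma norm_damped_le: "norm (damped x) \<le> majorant x"
proof -
  have "norm (damped x) \<le> (norm (exp (-(\<mu>1 * of_real x))) + norm (exp (-(\<mu>2 * of_real x)))
      + norm (exp (-(\<mu>3 * of_real x))) + norm (exp (-(\<mu>4 * of_real x)))) / 4"
    unfolding damped_expansion norm_divide
    by (simp only: norm_numeral) (intro divide_right_mono norm_add_diff_diff_le, simp)
  then show ?thesis unfolding majorant_def by (simp add: norm_exp_eq_Re)
qed

lemma norm_w_le_1: "x \<ge> 0 \<Longrightarrow> norm (w x) \<le> 1"
  unfolding w_def norm_exp_eq_Re using Re_c_pos by simp

lemma norm_J_le: "norm (J k) \<le> (1/Re \<mu>1 + 1/Re \<mu>2 + 1/Re \<mu>3 + 1/Re \<mu>4) / 4"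
proof -
  have b: "norm (1/(m + 2 * of_nat k * c)) \<le> 1/Re m" if "Re m > 0" for m
  proof -
    have "Re m \<le> Re (m + 2 * of_nat k * c)" using Re_c_pos by simp
    also have "\<dots> \<le> norm (m + 2 * of_nat k * c)" by (rule complex_Re_le_cmod)
    finally show ?thesis using that by (simp add: norm_divide divide_simps)
  qed
  have "norm (J k) = norm (1/(\<mu>1 + 2 * of_nat k * c) + 1/(\<mu>2 + 2 * of_nat k * c) -
      1/(\<mu>3 + 2 * of_nat k * c) - 1/(\<mu>4 + 2 * of_nat k * c)) / 4"
    unfolding J_def by (simp only: norm_divide) simp
  also have "\<dots> \<le> (1/Re \<mu>1 + 1/Re \<mu>2 + 1/Re \<mu>3 + 1/Re \<mu>4) / 4"
    by (intro divide_right_mono order.trans[OF norm_add_diff_diff_le] add_mono b Re_\<mu>_pos) auto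
  finally show ?thesis .
qed

lemma norm_w_power_damped_le:
  assumes "x \<ge> 0" shows "norm (w x ^ k * damped x) \<le> majorant x"
proof -
  have "norm (w x ^ k * damped x) = norm (w x) ^ k * norm (damped x)"
    by (simp add: norm_mult norm_power)
  also have "\<dots> \<le> 1 * majorant x"
    using norm_w_le_1[OF assms] norm_damped_le[of x] by (intro mult_mono power_le_one) auto
  finally show ?thesis by simp
qed

lemma summable_gbinomial_J:
  assumes r: "0 \<le> r" "r < 1"
  shows "summable (\<lambda>k. ((-v) gchoose k) * of_real r ^ k * J k)"
proof (rule summable_norm_cancel, rule summable_comparison_test')
  define C where "C = (1/Re \<mu>1 + 1/Re \<mu>2 + 1/Re \<mu>3 + 1/Re \<mu>4) / 4"
  show "summable (\<lambda>k. norm ((-v) gchoose k) * r ^ k * C)"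
    by (intro summable_mult2 summable_norm_gbinomial r)
  show "norm (norm (((-v) gchoose k) * of_real r ^ k * J k)) \<le> norm ((-v) gchoose k) * r ^ k * C" for k
  proof -
    have "norm (J k) \<le> C" using norm_J_le unfolding C_def .
    then show ?thesis using r by (simp add: norm_mult norm_power mult_left_mono)
  qed
qed

lemma has_integral_binomial_damped:
  assumes r: "0 \<le> r" "r < 1"
  shows "((\<lambda>x. (1 + of_real r * w x) powr (-v) * damped x) has_integral
           (\<Sum>k. ((-v) gchoose k) * of_real r ^ k * J k)) {0..}"
proof -
  define f where "f n x = (\<Sum>k<n. ((-v) gchoose k) * of_real r ^ k * (w x ^ k * damped x))" for n x
  define B where "B = (\<Sum>k. norm ((-v) gchoose k) * r ^ k)"
  have B: "summable (\<lambda>k. norm ((-v) gchoose k) * r ^ k)" by (rule summable_norm_gbinomial[OF r])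
  have fi: "(f n has_integral (\<Sum>k<n. ((-v) gchoose k) * of_real r ^ k * J k)) {0..}" for n
    unfolding f_def by (intro has_integral_sum has_integral_mult_right has_integral_w_power_damped) auto
  have hi: "(\<lambda>x. B * majorant x) integrable_on {0..}"
    using integrable_on_cmult_left[OF integrable_majorant, of B] by simp
  have bound: "\<forall>x\<in>{0..}. norm (f n x) \<le> B * majorant x" for n
  proof
    fix x :: real assume x: "x \<in> {0..}"
    have "norm (f n x) \<le> (\<Sum>k<n. norm ((-v) gchoose k) * r ^ k * majorant x)"
      unfolding f_def using r norm_w_power_damped_le[of x] x
      by (intro order.trans[OF norm_sum] sum_mono) (simp add: norm_mult norm_power mult_left_mono)
    also have "\<dots> \<le> B * majorant x"
      unfolding sum_distrib_right[symmetric] B_def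
      using sum_le_suminf[OF B, of "{..<n}"] r norm_w_power_damped_le[of x 0] x
      by (intro mult_right_mono) (auto intro: order.trans[OF norm_ge_zero])
    finally show "norm (f n x) \<le> B * majorant x" .
  qed
  have conv: "\<forall>x\<in>{0..}. (\<lambda>n. f n x) \<longlonglongrightarrow> (1 + of_real r * w x) powr (-v) * damped x"
  proof
    fix x :: real assume x: "x \<in> {0..}"
    have "norm (of_real r * w x) \<le> r * 1"
      using norm_w_le_1[of x] x r by (simp add: norm_mult mult_left_le)
    then have "(\<lambda>k. ((-v) gchoose k) * (of_real r * w x) ^ k) sums (1 + of_real r * w x) powr (-v)"
      using r by (intro gen_binomial_complex) auto
    then have "(\<lambda>k. ((-v) gchoose k) * (of_real r * w x) ^ k * damped x) sums
        ((1 + of_real r * w x) powr (-v) * damped x)"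
      by (rule sums_mult2)
    then show "(\<lambda>n. f n x) \<longlonglongrightarrow> (1 + of_real r * w x) powr (-v) * damped x"
      unfolding f_def sums_def by (simp add: power_mult_distrib mult_ac)
  qed
  have "(\<lambda>n. \<Sum>k<n. ((-v) gchoose k) * of_real r ^ k * J k) \<longlonglongrightarrow> (\<Sum>k. ((-v) gchoose k) * of_real r ^ k * J k)"
    using summable_gbinomial_J[OF r] by (simp add: summable_LIMSEQ)
  then show ?thesis
    by (rule has_integral_dominated_convergence[OF fi hi bound conv])
qed

lemma one_plus_rw_nonzero: "0 \<le> r \<Longrightarrow> r \<le> 1 \<Longrightarrow> 0 \<le> x \<Longrightarrow> 1 + of_real r * w x \<noteq> 0"
proof
  assume r: "0 \<le> r" "r \<le> 1" and x: "0 \<le> x" and z: "1 + of_real r * w x = 0"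
  then have "norm (of_real r * w x) = 1" by (simp add: add_eq_0_iff)
  moreover have "norm (of_real r * w x) = r * exp (-2 * Re c * x)"
    using r(1) by (simp add: norm_mult w_def norm_exp_eq_Re)
  ultimately have n: "r * exp (-2 * Re c * x) = 1" by simp
  show False
  proof (cases "x = 0")
    case True
    then have "complex_of_real (1 + r) = 0" using z by (simp add: w_def)
    then have "1 + r = 0" by (simp only: of_real_eq_0_iff)
    then show False using r by simp
  next
    case False
    have "x > 0" using x False by simp
    then have "-2 * Re c * x < 0" using Re_c_pos by (simp add: mult_pos_pos)
    then have e: "exp (-2 * Re c * x) < 1" by simp
    have "r * exp (-2 * Re c * x) \<le> 1 * exp (-2 * Re c * x)" using r by (intro mult_right_mono) auto
    then show False using n e by linarith
  qed
qed

lemma norm_w_le_half: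
  assumes "x \<ge> 1 / Re c"
  shows "norm (w x) \<le> 1/2"
proof -
  have "norm (w x) = exp (-2 * Re c * x)" by (simp add: w_def norm_exp_eq_Re)
  also have "\<dots> \<le> exp (-2 * Re c * (1 / Re c))"
    using assms Re_c_pos by (simp add: divide_le_eq mult.commute)
  also have "\<dots> = exp (-2)" using Re_c_pos by simp
  also have "exp (-2::real) \<le> 1/2"
    using exp_ge_add_one_self_aux[of "2::real"] by (simp add: exp_minus field_simps)
  finally show ?thesis .
qed

text \<open>On the compact set \<open>[0,1] \<times> [0, 1/Re c]\<close> this is continuity; beyond it \<open>|w| \<le> 1/2\<close>.\<close>

lemma norm_one_plus_rw_lower_bound: "\<exists>\<delta>>0. \<forall>r x. 0 \<le> r \<longrightarrow> r \<le> 1 \<longrightarrow> 0 \<le> x \<longrightarrow> \<delta> \<le> norm (1 + of_real r * w x)"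
proof -
  define X where "X = 1 / Re c"
  have X: "X > 0" using Re_c_pos by (simp add: X_def)
  define K where "K = {0..1::real} \<times> {0..X}"
  define g where "g p = norm (1 + of_real (fst p) * exp (-2 * c * complex_of_real (snd p)))" for p :: "real \<times> real"
  have "compact K" unfolding K_def by (intro compact_Times compact_Icc)
  moreover have "K \<noteq> {}" using X unfolding K_def by auto
  moreover have "continuous_on K g" unfolding g_def by (intro continuous_intros)
  ultimately obtain p where p: "p \<in> K" "\<forall>q\<in>K. g p \<le> g q"
    using continuous_attains_inf[of K g] by auto
  have gp: "g p > 0"
    using one_plus_rw_nonzero[of "fst p" "snd p"] p(1) unfolding g_def K_def w_def by (auto simp: mem_Times_iff)
  define \<delta> where "\<delta> = min (g p) (1/2)"
  show ?thesis
  proof (intro exI[of _ \<delta>] conjI allI impI)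
    show "\<delta> > 0" using gp by (simp add: \<delta>_def)
    fix r x :: real assume r: "0 \<le> r" "r \<le> 1" and x: "0 \<le> x"
    show "\<delta> \<le> norm (1 + of_real r * w x)"
    proof (cases "x \<le> X")
      case True
      then have "(r, x) \<in> K" using r x by (simp add: K_def)
      then have "g p \<le> g (r, x)" using p by blast
      then show ?thesis by (simp add: \<delta>_def g_def w_def)
    next
      case False
      then have nw: "norm (w x) \<le> 1/2"
        by (intro norm_w_le_half) (simp add: X_def)
      have "norm (of_real r * w x) = r * norm (w x)" using r by (simp add: norm_mult)
      also have "\<dots> \<le> 1 * (1/2)" using nw r by (intro mult_mono) auto
      finally have "norm (of_real r * w x) \<le> 1/2" by simp
      then have "1/2 \<le> norm (1 + of_real r * w x)"
        using norm_triangle_ineq2[of 1 "- (of_real r * w x)"] by (simp add: norm_minus_commute)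
      then show ?thesis by (simp add: \<delta>_def)
    qed
  qed
qed

lemma norm_powr_one_plus_rw_bounded: "\<exists>B. \<forall>r x. 0 \<le> r \<longrightarrow> r \<le> 1 \<longrightarrow> 0 \<le> x \<longrightarrow> norm ((1 + of_real r * w x) powr (-v)) \<le> B"
proof -
  obtain \<delta> where d: "\<delta> > 0" "\<forall>r x. 0 \<le> r \<longrightarrow> r \<le> 1 \<longrightarrow> 0 \<le> x \<longrightarrow> \<delta> \<le> norm (1 + of_real r * w x)"
    using norm_one_plus_rw_lower_bound by blast
  define B where "B = (\<delta> powr (- Re v) + 2 powr (- Re v)) * exp (\<bar>Im v\<bar> * pi)"
  show ?thesis
  proof (intro exI[of _ B] allI impI)
    fix r x :: real assume r: "0 \<le> r" "r \<le> 1" and x: "0 \<le> x"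
    define z where "z = 1 + of_real r * w x"
    have zl: "\<delta> \<le> norm z" using d r x by (simp add: z_def)
    have "norm z \<le> norm (1::complex) + norm (of_real r * w x)" unfolding z_def by (rule norm_triangle_ineq)
    also have "norm (of_real r * w x) \<le> 1 * 1"
      using r norm_w_le_1[OF x] unfolding norm_mult by (intro mult_mono) auto
    finally have zu: "norm z \<le> 2" by simp
    have p: "norm z powr (- Re v) \<le> \<delta> powr (- Re v) + 2 powr (- Re v)"
    proof (cases "- Re v \<ge> 0")
      case True
      then have "norm z powr (- Re v) \<le> 2 powr (- Re v)" using zu d zl by (intro powr_mono2) auto
      then show ?thesis using d by (simp add: add_increasing)
    next
      case False
      then have "norm z powr (- Re v) \<le> \<delta> powr (- Re v)" using zu d zl by (intro powr_mono2') auto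
      then show ?thesis using d by (simp add: add_increasing2)
    qed
    have e: "exp (- Im (-v) * Arg z) \<le> exp (\<bar>Im v\<bar> * pi)"
    proof -
      have "Im v * Arg z \<le> \<bar>Im v * Arg z\<bar>" by simp
      also have "\<dots> = \<bar>Im v\<bar> * \<bar>Arg z\<bar>" by (simp add: abs_mult)
      also have "\<dots> \<le> \<bar>Im v\<bar> * pi" using Arg_bounded[of z] by (intro mult_left_mono) auto
      finally show ?thesis by simp
    qed
    have "norm (z powr (-v)) = norm z powr Re (-v) * exp (- Im (-v) * Arg z)" by (rule norm_powr_complex)
    also have "\<dots> \<le> (\<delta> powr (- Re v) + 2 powr (- Re v)) * exp (\<bar>Im v\<bar> * pi)"
      using p e by (intro mult_mono) auto
    finally show "norm ((1 + of_real r * w x) powr (-v)) \<le> B" by (simp add: B_def z_def)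
  qed
qed

lemma Re_one_plus_w_pos: "0 \<le> x \<Longrightarrow> Re (1 + w x) > 0"
proof (cases "x = 0")
  case True then show ?thesis by (simp add: w_def)
next
  case False
  assume x: "0 \<le> x"
  then have "-2 * Re c * x < 0" using False Re_c_pos by (simp add: mult_pos_pos)
  then have "norm (w x) < 1" by (simp add: w_def norm_exp_eq_Re)
  moreover have "- Re (w x) \<le> norm (w x)" using abs_Re_le_cmod[of "w x"] by linarith
  ultimately show ?thesis by simp
qed

lemma has_integral_damped_limit:
  fixes t :: "nat \<Rightarrow> real"
  assumes t: "t \<longlonglongrightarrow> 1" "\<And>n. 0 \<le> t n" "\<And>n. t n < 1"
    and L: "(\<lambda>n. \<Sum>k. ((-v) gchoose k) * of_real (t n) ^ k * J k) \<longlonglongrightarrow> L"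
  shows "((\<lambda>x. (1 + w x) powr (-v) * damped x) has_integral L) {0..}"
proof -
  obtain B where B: "\<forall>r x. 0 \<le> r \<longrightarrow> r \<le> 1 \<longrightarrow> 0 \<le> x \<longrightarrow> norm ((1 + of_real r * w x) powr (-v)) \<le> B"
    using norm_powr_one_plus_rw_bounded by blast
  have B0: "0 \<le> B" using B[rule_format, of 0 0] norm_ge_zero order.trans by fastforce
  define f where "f n x = (1 + of_real (t n) * w x) powr (-v) * damped x" for n x
  have fi: "(f n has_integral (\<Sum>k. ((-v) gchoose k) * of_real (t n) ^ k * J k)) {0..}" for n
    unfolding f_def using has_integral_binomial_damped[OF t(2,3)] .
  have hi: "(\<lambda>x. B * majorant x) integrable_on {0..}"
    using integrable_on_cmult_left[OF integrable_majorant, of B] by simp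
  have bound: "\<forall>x\<in>{0..}. norm (f n x) \<le> B * majorant x" for n
  proof
    fix x :: real assume x: "x \<in> {0..}"
    have "norm ((1 + of_real (t n) * w x) powr (-v)) \<le> B" using B t(2,3)[of n] x by (simp add: less_imp_le)
    then show "norm (f n x) \<le> B * majorant x"
      unfolding f_def norm_mult using norm_damped_le[of x] B0 by (intro mult_mono) auto
  qed
  have conv: "\<forall>x\<in>{0..}. (\<lambda>n. f n x) \<longlonglongrightarrow> (1 + w x) powr (-v) * damped x"
  proof
    fix x :: real assume x: "x \<in> {0..}"
    have nz: "1 + w x \<notin> \<real>\<^sub>\<le>\<^sub>0" using Re_one_plus_w_pos[of x] x by (auto simp: complex_nonpos_Reals_iff)
    have "(\<lambda>n. 1 + of_real (t n) * w x) \<longlonglongrightarrow> 1 + of_real 1 * w x"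
      by (intro tendsto_intros t)
    then have "(\<lambda>n. (1 + of_real (t n) * w x) powr (-v)) \<longlonglongrightarrow> (1 + w x) powr (-v)"
      using tendsto_powr_complex[OF nz _ tendsto_const[of "-v"]] by simp
    then show "(\<lambda>n. f n x) \<longlonglongrightarrow> (1 + w x) powr (-v) * damped x"
      unfolding f_def by (rule tendsto_mult_right)
  qed
  show ?thesis by (rule has_integral_dominated_convergence[OF fi hi bound conv L])
qed

end

locale cosh_power_hypergeometric = cosh_power_integral +
  fixes s :: complex
  assumes Re_v_lt_3: "Re v < 3" and s_sq: "s^2 = a^2 - b^2"
    and \<sigma>_not_nonpos_Int: "v/2 - s/(2*c) \<notin> \<int>\<^sub>\<le>\<^sub>0" "v/2 + s/(2*c) \<notin> \<int>\<^sub>\<le>\<^sub>0"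
      "1 + (v/2 - a/(2*c) - b/(2*c)) \<notin> \<int>\<^sub>\<le>\<^sub>0" "1 + (v/2 - a/(2*c) + b/(2*c)) \<notin> \<int>\<^sub>\<le>\<^sub>0"
      "1 + (v/2 + a/(2*c) + b/(2*c)) \<notin> \<int>\<^sub>\<le>\<^sub>0" "1 + (v/2 + a/(2*c) - b/(2*c)) \<notin> \<int>\<^sub>\<le>\<^sub>0"
begin

definition "\<sigma>1 = v/2 - s/(2*c)"
definition "\<sigma>2 = v/2 + s/(2*c)"
definition "\<sigma>3 = v/2 - a/(2*c) - b/(2*c)"
definition "\<sigma>4 = v/2 - a/(2*c) + b/(2*c)"
definition "\<sigma>5 = v/2 + a/(2*c) + b/(2*c)"
definition "\<sigma>6 = v/2 + a/(2*c) - b/(2*c)"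

definition "hg_term k =
  (\<Prod>a\<leftarrow>[v, 1 + \<sigma>1, 1 + \<sigma>2, \<sigma>3, \<sigma>4, \<sigma>5, \<sigma>6]. pochhammer a k) /
  (\<Prod>b\<leftarrow>[\<sigma>1, \<sigma>2, 1 + \<sigma>3, 1 + \<sigma>4, 1 + \<sigma>5, 1 + \<sigma>6]. pochhammer b k) * (-1) ^ k / fact k"

definition "poch_v k = pochhammer v k / fact k"

definition "ratio k = (\<sigma>1 + of_nat k) * (\<sigma>2 + of_nat k) / (\<sigma>1 * \<sigma>2)
  * (\<sigma>3 / (\<sigma>3 + of_nat k)) * (\<sigma>4 / (\<sigma>4 + of_nat k)) * (\<sigma>5 / (\<sigma>5 + of_nat k)) * (\<sigma>6 / (\<sigma>6 + of_nat k))"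

definition "prefactor =
  (v^2 * a * c^2 - a^3 + a * b^2) / ((v * c - a - b) * (v * c + a + b) * (v * c - a + b) * (v * c + a - b))"

lemma c_nonzero: "c \<noteq> 0"
  using Re_c_pos by auto

lemma \<sigma>_shift: "\<sigma>3 + of_nat k = (\<mu>1 + 2 * of_nat k * c) / (2*c)"
  "\<sigma>4 + of_nat k = (\<mu>2 + 2 * of_nat k * c) / (2*c)"
  "\<sigma>5 + of_nat k = (\<mu>4 + 2 * of_nat k * c) / (2*c)"
  "\<sigma>6 + of_nat k = (\<mu>3 + 2 * of_nat k * c) / (2*c)"
  using c_nonzero by (simp_all add: \<sigma>3_def \<sigma>4_def \<sigma>5_def \<sigma>6_def \<mu>1_def \<mu>2_def \<mu>3_def \<mu>4_def field_simps)

lemma \<mu>_shift_nonzero: "\<mu>1 + 2 * of_nat k * c \<noteq> 0" "\<mu>2 + 2 * of_nat k * c \<noteq> 0"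
   "\<mu>3 + 2 * of_nat k * c \<noteq> 0" "\<mu>4 + 2 * of_nat k * c \<noteq> 0"
  using Re_shift_pos[OF Re_\<mu>_pos(1), of k] Re_shift_pos[OF Re_\<mu>_pos(2), of k]
    Re_shift_pos[OF Re_\<mu>_pos(3), of k] Re_shift_pos[OF Re_\<mu>_pos(4), of k] by fastforce+

lemma \<sigma>_shift_nonzero: "\<sigma>3 + of_nat k \<noteq> 0" "\<sigma>4 + of_nat k \<noteq> 0" "\<sigma>5 + of_nat k \<noteq> 0" "\<sigma>6 + of_nat k \<noteq> 0"
  unfolding \<sigma>_shift using \<mu>_shift_nonzero c_nonzero by auto

lemma \<sigma>12_nonzero: "\<sigma>1 \<noteq> 0" "\<sigma>2 \<noteq> 0"
  using \<sigma>_not_nonpos_Int(1,2) unfolding \<sigma>1_def \<sigma>2_def by auto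

lemma hg_term_eq: "hg_term k = (-1)^k * poch_v k * ratio k"
proof -
  have up: "pochhammer (1 + z) k / pochhammer z k = (z + of_nat k) / z"
    if "z \<noteq> 0" "z \<notin> \<int>\<^sub>\<le>\<^sub>0" for z :: complex
  proof -
    have "pochhammer z k \<noteq> 0" using that(2) pochhammer_eq_0_imp_nonpos_Int by blast
    with pochhammer_one_plus_ratio[of z k] that(1) show ?thesis by (simp add: field_simps)
  qed
  have down: "pochhammer z k / pochhammer (1 + z) k = z / (z + of_nat k)"
    if "z + of_nat k \<noteq> 0" "1 + z \<notin> \<int>\<^sub>\<le>\<^sub>0" for z :: complex
  proof -
    have "pochhammer (1 + z) k \<noteq> 0" using that(2) pochhammer_eq_0_imp_nonpos_Int by blast
    with pochhammer_one_plus_ratio[of z k] that(1) show ?thesis by (simp add: field_simps)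
  qed
  have "hg_term k = pochhammer v k
      * (pochhammer (1 + \<sigma>1) k / pochhammer \<sigma>1 k) * (pochhammer (1 + \<sigma>2) k / pochhammer \<sigma>2 k)
      * (pochhammer \<sigma>3 k / pochhammer (1 + \<sigma>3) k) * (pochhammer \<sigma>4 k / pochhammer (1 + \<sigma>4) k)
      * (pochhammer \<sigma>5 k / pochhammer (1 + \<sigma>5) k) * (pochhammer \<sigma>6 k / pochhammer (1 + \<sigma>6) k)
      * (-1)^k / fact k"
    unfolding hg_term_def by (simp add: divide_inverse inverse_mult_distrib mult_ac)
  then show ?thesis
    using up[OF \<sigma>12_nonzero(1) \<sigma>_not_nonpos_Int(1)[folded \<sigma>1_def]]
      up[OF \<sigma>12_nonzero(2) \<sigma>_not_nonpos_Int(2)[folded \<sigma>2_def]]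
      down[OF \<sigma>_shift_nonzero(1) \<sigma>_not_nonpos_Int(3)[folded \<sigma>3_def]]
      down[OF \<sigma>_shift_nonzero(2) \<sigma>_not_nonpos_Int(4)[folded \<sigma>4_def]]
      down[OF \<sigma>_shift_nonzero(3) \<sigma>_not_nonpos_Int(5)[folded \<sigma>5_def]]
      down[OF \<sigma>_shift_nonzero(4) \<sigma>_not_nonpos_Int(6)[folded \<sigma>6_def]]
    by (simp add: poch_v_def ratio_def mult_ac)
qed

lemma \<sigma>_shift_ratio:
  "\<sigma>3 / (\<sigma>3 + of_nat k) = \<mu>1 / (\<mu>1 + 2 * of_nat k * c)"
  "\<sigma>4 / (\<sigma>4 + of_nat k) = \<mu>2 / (\<mu>2 + 2 * of_nat k * c)"
  "\<sigma>5 / (\<sigma>5 + of_nat k) = \<mu>4 / (\<mu>4 + 2 * of_nat k * c)"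
  "\<sigma>6 / (\<sigma>6 + of_nat k) = \<mu>3 / (\<mu>3 + 2 * of_nat k * c)"
proof -
  have cancel: "(x / (2*c)) / (y / (2*c)) = x / y" for x y
    using c_nonzero by (cases "y = 0") (simp_all add: field_simps)
  have "\<sigma>3 = \<mu>1 / (2*c)" "\<sigma>4 = \<mu>2 / (2*c)" "\<sigma>5 = \<mu>4 / (2*c)" "\<sigma>6 = \<mu>3 / (2*c)"
    using \<sigma>_shift[of 0] by simp_all
  then show "\<sigma>3 / (\<sigma>3 + of_nat k) = \<mu>1 / (\<mu>1 + 2 * of_nat k * c)"
    "\<sigma>4 / (\<sigma>4 + of_nat k) = \<mu>2 / (\<mu>2 + 2 * of_nat k * c)"
    "\<sigma>5 / (\<sigma>5 + of_nat k) = \<mu>4 / (\<mu>4 + 2 * of_nat k * c)"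
    "\<sigma>6 / (\<sigma>6 + of_nat k) = \<mu>3 / (\<mu>3 + 2 * of_nat k * c)"
    unfolding \<sigma>_shift by (simp_all only: cancel)
qed

lemma \<sigma>12_shift_product:
  "(\<sigma>1 + of_nat k) * (\<sigma>2 + of_nat k) = ((v * c + 2 * of_nat k * c)^2 - s^2) / (4 * c^2)"
  using c_nonzero unfolding \<sigma>1_def \<sigma>2_def by (simp add: field_simps power2_eq_square)

lemma J_eq: "J k = prefactor * ratio k"
proof -
  define l where "l = v * c + 2 * of_nat k * c"
  define q where "q = (v * c)^2 - s^2"
  define M where "M = \<mu>1 * \<mu>2 * \<mu>3 * \<mu>4"
  define D where "D = (l - a - b) * (l - a + b) * (l + a - b) * (l + a + b)"
  define L where "L = l^2 - a^2 + b^2"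
  have shift: "\<mu>1 + 2 * of_nat k * c = l - a - b" "\<mu>2 + 2 * of_nat k * c = l - a + b"
    "\<mu>3 + 2 * of_nat k * c = l + a - b" "\<mu>4 + 2 * of_nat k * c = l + a + b"
    unfolding l_def \<mu>1_def \<mu>2_def \<mu>3_def \<mu>4_def by (simp_all add: algebra_simps)
  have nz: "l - a - b \<noteq> 0" "l - a + b \<noteq> 0" "l + a - b \<noteq> 0" "l + a + b \<noteq> 0"
    using \<mu>_shift_nonzero[of k] unfolding shift by auto
  have \<sigma>12: "\<sigma>1 * \<sigma>2 = q / (4 * c^2)"
    using \<sigma>12_shift_product[of 0] by (simp add: q_def)
  then have q: "q \<noteq> 0"
    using \<sigma>12_nonzero by auto
  have M: "M \<noteq> 0" unfolding M_def using Re_\<mu>_pos by auto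
  have D: "D \<noteq> 0" unfolding D_def using nz by simp
  have J: "J k = a * L / D"
    unfolding J_def shift L_def D_def by (rule sinh_cosh_partial_fractions[OF nz])
  have "(\<sigma>1 + of_nat k) * (\<sigma>2 + of_nat k) / (\<sigma>1 * \<sigma>2) = L / q"
    unfolding \<sigma>12 \<sigma>12_shift_product l_def[symmetric] L_def s_sq using c_nonzero q
    by (simp add: field_simps)
  then have R: "ratio k = L / q * M / D"
    unfolding ratio_def \<sigma>_shift_ratio shift M_def D_def
    by (simp add: divide_inverse inverse_mult_distrib mult_ac)
  have "v^2 * a * c^2 - a^3 + a * b^2 = a * q"
    unfolding q_def using s_sq by algebra
  moreover have "(v * c - a - b) * (v * c + a + b) * (v * c - a + b) * (v * c + a - b) = M"
    unfolding M_def \<mu>1_def \<mu>2_def \<mu>3_def \<mu>4_def by (simp add: mult_ac)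
  ultimately have P: "prefactor = a * q / M"
    unfolding prefactor_def by simp
  show ?thesis
    unfolding J R P using q M D by (simp add: field_simps)
qed

lemma gbinomial_J_eq: "((-v) gchoose k) * J k = prefactor * hg_term k"
  unfolding J_eq hg_term_eq gbinomial_pochhammer poch_v_def by simp

definition "ratio_const = \<sigma>3 * \<sigma>4 * \<sigma>5 * \<sigma>6 / (\<sigma>1 * \<sigma>2)"

lemma ratio_eq_sq_ratio:
  "ratio k = ratio_const * sq_ratio (a/(2*c) + b/(2*c)) (a/(2*c) - b/(2*c)) (s/(2*c)) (of_nat k + v/2)"
proof -
  define K where "K = (of_nat k :: complex)"
  define m where "m = K + v/2"
  have "(\<sigma>1 + K) * (\<sigma>2 + K) = m^2 - (s/(2*c))^2"
    "(\<sigma>3 + K) * (\<sigma>5 + K) = m^2 - (a/(2*c) + b/(2*c))^2"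
    "(\<sigma>4 + K) * (\<sigma>6 + K) = m^2 - (a/(2*c) - b/(2*c))^2"
    unfolding \<sigma>1_def \<sigma>2_def \<sigma>3_def \<sigma>4_def \<sigma>5_def \<sigma>6_def m_def
    by (simp_all add: power2_eq_square algebra_simps add_divide_distrib)
  moreover have "ratio k = ratio_const *
      ((\<sigma>1 + K) * (\<sigma>2 + K) / (((\<sigma>3 + K) * (\<sigma>5 + K)) * ((\<sigma>4 + K) * (\<sigma>6 + K))))"
    unfolding ratio_def ratio_const_def K_def by (simp add: divide_inverse inverse_mult_distrib mult_ac)
  ultimately show ?thesis unfolding sq_ratio_def m_def K_def by simp
qed

definition "pair_diff k = ratio k - (v + of_nat k) / (of_nat k + 1) * ratio (Suc k)"

lemma pair_diff_eq:
  fixes \<alpha> \<beta> \<gamma> :: complex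
  defines "\<alpha> \<equiv> a/(2*c) + b/(2*c)" and "\<beta> \<equiv> a/(2*c) - b/(2*c)" and "\<gamma> \<equiv> s/(2*c)"
  shows "pair_diff k =
    ratio_const * (sq_ratio \<alpha> \<beta> \<gamma> (of_nat k + v/2) - sq_ratio \<alpha> \<beta> \<gamma> (of_nat k + v/2 + 1))
    + ratio_const * ((1 - v) / (of_nat k + 1)) * sq_ratio \<alpha> \<beta> \<gamma> (of_nat k + v/2 + 1)"
proof -
  have "(of_nat k + 1 :: complex) \<noteq> 0"
    by (metis of_nat_Suc of_nat_eq_0_iff add.commute nat.distinct(1))
  then have q: "(v + of_nat k) / (of_nat k + 1) = 1 - (1 - v) / (of_nat k + 1 :: complex)"
    by (simp add: field_simps)
  have s: "of_nat (Suc k) + v/2 = of_nat k + v/2 + (1::complex)" by simp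
  show ?thesis
    unfolding pair_diff_def ratio_eq_sq_ratio assms s q by (simp add: algebra_simps)
qed

lemma hg_term_pair:
  assumes "even k"
  shows "hg_term k + hg_term (Suc k) = poch_v k * pair_diff k"
proof -
  have "poch_v (Suc k) = poch_v k * ((v + of_nat k) / (of_nat k + 1))"
    unfolding poch_v_def by (simp add: pochhammer_Suc field_simps)
  then have "hg_term (Suc k) = - (poch_v k * ((v + of_nat k) / (of_nat k + 1)) * ratio (Suc k))"
    using assms unfolding hg_term_eq by simp
  moreover have "hg_term k = poch_v k * ratio k"
    using assms unfolding hg_term_eq by simp
  ultimately show ?thesis
    unfolding pair_diff_def by (simp add: algebra_simps)
qed

lemma eventually_nat_plus_half_ge:
  assumes "K \<ge> 0"
  shows "\<forall>\<^sub>F k in sequentially. real k \<ge> 2 \<and>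
    norm (of_nat k + v/2) \<ge> real k / 2 \<and> norm (of_nat k + v/2) \<ge> K + 1 \<and>
    norm (of_nat k + v/2 + 1) \<ge> real k / 2 \<and> norm (of_nat k + v/2 + 1) \<ge> K"
proof (rule eventually_sequentiallyI[of "nat \<lceil>2 * K + 2 + norm v\<rceil>"])
  fix k assume "nat \<lceil>2 * K + 2 + norm v\<rceil> \<le> k"
  then have "real k \<ge> 2 * K + 2 + norm v" by linarith
  with assms norm_nat_plus_half_ge[OF assms this] norm_ge_zero[of v]
  show "real k \<ge> 2 \<and> norm (of_nat k + v/2) \<ge> real k / 2 \<and> norm (of_nat k + v/2) \<ge> K + 1 \<and>
    norm (of_nat k + v/2 + 1) \<ge> real k / 2 \<and> norm (of_nat k + v/2 + 1) \<ge> K"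
    by linarith
qed

lemma ratio_decay: "\<exists>C. \<forall>\<^sub>F k in sequentially. norm (ratio k) \<le> C / real k ^ 2"
proof -
  define F where "F = sq_ratio (a/(2*c) + b/(2*c)) (a/(2*c) - b/(2*c)) (s/(2*c))"
  obtain C K where C: "C \<ge> 0" "K \<ge> 0"
    and F: "\<forall>m. norm m \<ge> K \<longrightarrow> norm (F m) \<le> C / norm m ^ 2"
    using sq_ratio_decay unfolding F_def by blast
  have bound: "norm (ratio k) \<le> 4 * norm ratio_const * C / real k ^ 2"
    if k: "real k \<ge> 2" "norm (of_nat k + v/2) \<ge> real k / 2" "norm (of_nat k + v/2) \<ge> K" for k
  proof -
    have "norm (ratio k) \<le> norm ratio_const * (C / norm (of_nat k + v/2) ^ 2)"
      unfolding ratio_eq_sq_ratio F_def[symmetric] norm_mult by (intro mult_left_mono F[rule_format] k) auto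
    also have "\<dots> \<le> norm ratio_const * (C / (real k / 2) ^ 2)"
      using k C by (intro mult_left_mono frac_le power_mono) auto
    finally show ?thesis by (simp add: power_divide mult_ac)
  qed
  have "\<forall>\<^sub>F k in sequentially. norm (ratio k) \<le> 4 * norm ratio_const * C / real k ^ 2"
    using eventually_nat_plus_half_ge[OF C(2)] by (rule eventually_mono) (auto intro!: bound)
  then show ?thesis ..
qed

lemma pair_diff_decay: "\<exists>C. \<forall>\<^sub>F k in sequentially. norm (pair_diff k) \<le> C / real k ^ 3"
proof -
  define F where "F = sq_ratio (a/(2*c) + b/(2*c)) (a/(2*c) - b/(2*c)) (s/(2*c))"
  obtain C K where C: "C \<ge> 0" "K \<ge> 0"
    and F1: "\<forall>m. norm m \<ge> K \<longrightarrow> norm (F m) \<le> C / norm m ^ 2"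
    and F2: "\<forall>m. norm m \<ge> K + 1 \<longrightarrow> norm (F m - F (m + 1)) \<le> C / norm m ^ 3"
    using sq_ratio_decay unfolding F_def by blast
  define C' where "C' = norm ratio_const * C * (8 + 4 * norm (1 - v))"
  have bound: "norm (pair_diff k) \<le> C' / real k ^ 3"
    if k: "real k \<ge> 2" "norm (of_nat k + v/2) \<ge> real k / 2" "norm (of_nat k + v/2) \<ge> K + 1"
      "norm (of_nat k + v/2 + 1) \<ge> real k / 2" "norm (of_nat k + v/2 + 1) \<ge> K" for k
  proof -
    define m where "m = of_nat k + v/2"
    have "norm (F m - F (m + 1)) \<le> C / norm m ^ 3"
      using F2 k(3) by (simp add: m_def)
    also have "\<dots> \<le> C / (real k / 2) ^ 3"
      using k C by (intro frac_le power_mono) (auto simp: m_def)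
    finally have t1: "norm (F m - F (m + 1)) \<le> 8 * C / real k ^ 3"
      by (simp add: power_divide mult_ac)
    have "norm (F (m + 1)) \<le> C / norm (m + 1) ^ 2"
      using F1 k(5) by (simp add: m_def)
    also have "\<dots> \<le> C / (real k / 2) ^ 2"
      using k C by (intro frac_le power_mono) (auto simp: m_def)
    finally have "norm (F (m + 1)) \<le> 4 * C / real k ^ 2"
      by (simp add: power_divide mult_ac)
    from norm_divide_Suc_mult_le[OF k(1) this, of "1 - v"]
    have t2: "norm ((1 - v) / (of_nat k + 1) * F (m + 1)) \<le> 4 * norm (1 - v) * C / real k ^ 3"
      by (simp add: mult_ac)
    have "norm (pair_diff k) \<le> norm (ratio_const * (F m - F (m + 1)))
        + norm (ratio_const * ((1 - v) / (of_nat k + 1)) * F (m + 1))"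
      unfolding pair_diff_eq F_def[symmetric] m_def[symmetric] by (rule norm_triangle_ineq)
    also have "\<dots> = norm ratio_const * (norm (F m - F (m + 1)) + norm ((1 - v) / (of_nat k + 1) * F (m + 1)))"
      by (simp only: norm_mult distrib_left mult.assoc)
    also have "\<dots> \<le> norm ratio_const * (8 * C / real k ^ 3 + 4 * norm (1 - v) * C / real k ^ 3)"
      using t1 t2 by (intro mult_left_mono add_mono) auto
    also have "\<dots> = C' / real k ^ 3"
      by (simp add: C'_def add_divide_distrib[symmetric] algebra_simps)
    finally show ?thesis .
  qed
  have "\<forall>\<^sub>F k in sequentially. norm (pair_diff k) \<le> C' / real k ^ 3"
    using eventually_nat_plus_half_ge[OF C(2)] by (rule eventually_mono) (auto intro!: bound)
  then show ?thesis ..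
qed

lemma hg_term_decay: "\<exists>C. \<forall>\<^sub>F k in sequentially. norm (hg_term k) \<le> C * real k powr (Re v - 3)"
proof -
  obtain M where M: "\<forall>k\<ge>1. norm (poch_v k) \<le> M * real k powr (Re v - 1)"
    using norm_pochhammer_over_fact_le[of v] unfolding poch_v_def by blast
  obtain C where C: "\<forall>\<^sub>F k in sequentially. norm (ratio k) \<le> C / real k ^ 2"
    using ratio_decay by blast
  have bound: "norm (hg_term k) \<le> M * C * real k powr (Re v - 3)"
    if k: "k \<ge> 1" and R: "norm (ratio k) \<le> C / real k ^ 2" for k
  proof -
    have "norm (hg_term k) = norm (poch_v k) * norm (ratio k)"
      unfolding hg_term_eq by (simp add: norm_mult norm_power)
    also have "\<dots> \<le> (M * real k powr (Re v - 1)) * (C / real k ^ 2)"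
      using M k R by (intro mult_mono) (auto intro: order.trans[OF norm_ge_zero])
    also have "real k ^ 2 = real k powr 2" using k by (simp add: powr_realpow)
    also have "M * real k powr (Re v - 1) * (C / real k powr 2) =
        M * C * (real k powr (Re v - 1) / real k powr 2)"
      by simp
    also have "real k powr (Re v - 1) / real k powr 2 = real k powr (Re v - 3)"
      unfolding powr_diff[symmetric] by (simp add: algebra_simps)
    finally show ?thesis .
  qed
  have "\<forall>\<^sub>F k in sequentially. norm (hg_term k) \<le> M * C * real k powr (Re v - 3)"
    using eventually_conj[OF eventually_ge_at_top[of 1] C] by (rule eventually_mono) (blast intro: bound)
  then show ?thesis ..
qed

lemma hg_pair_decay:
  "\<exists>C. \<forall>\<^sub>F j in sequentially. norm (hg_term (2*j) + hg_term (Suc (2*j))) \<le> C * real j powr (Re v - 4)"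
proof -
  obtain M where M: "\<forall>k\<ge>1. norm (poch_v k) \<le> M * real k powr (Re v - 1)"
    using norm_pochhammer_over_fact_le[of v] unfolding poch_v_def by blast
  obtain C where "\<forall>\<^sub>F k in sequentially. norm (pair_diff k) \<le> C / real k ^ 3"
    using pair_diff_decay by blast
  then obtain N where C: "\<And>k. k \<ge> N \<Longrightarrow> norm (pair_diff k) \<le> C / real k ^ 3"
    unfolding eventually_sequentially by blast
  have bound: "norm (hg_term (2*j) + hg_term (Suc (2*j))) \<le> M * C * 2 powr (Re v - 4) * real j powr (Re v - 4)"
    if j: "j \<ge> N + 1" for j
  proof -
    have k: "2*j \<ge> N" "2*j \<ge> 1" "real (2*j) > 0" using j by auto
    have "norm (hg_term (2*j) + hg_term (Suc (2*j))) = norm (poch_v (2*j)) * norm (pair_diff (2*j))"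
      by (simp add: hg_term_pair norm_mult)
    also have "\<dots> \<le> (M * real (2*j) powr (Re v - 1)) * (C / real (2*j) ^ 3)"
      using M[rule_format, OF k(2)] C[OF k(1)]
      by (intro mult_mono) (auto intro: order.trans[OF norm_ge_zero])
    also have "real (2*j) ^ 3 = real (2*j) powr 3" using k by (simp add: powr_realpow)
    also have "M * real (2*j) powr (Re v - 1) * (C / real (2*j) powr 3) =
        M * C * (real (2*j) powr (Re v - 1) / real (2*j) powr 3)"
      by simp
    also have "real (2*j) powr (Re v - 1) / real (2*j) powr 3 = real (2*j) powr (Re v - 4)"
      unfolding powr_diff[symmetric] by (simp add: algebra_simps)
    also have "real (2*j) powr (Re v - 4) = 2 powr (Re v - 4) * real j powr (Re v - 4)"
      by (simp add: powr_mult)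
    finally show ?thesis by (simp add: mult_ac)
  qed
  then have "\<forall>\<^sub>F j in sequentially.
      norm (hg_term (2*j) + hg_term (Suc (2*j))) \<le> M * C * 2 powr (Re v - 4) * real j powr (Re v - 4)"
    unfolding eventually_sequentially by blast
  then show ?thesis ..
qed

lemma hg_term_tendsto_zero: "hg_term \<longlonglongrightarrow> 0"
proof -
  obtain C where C: "\<forall>\<^sub>F k in sequentially. norm (hg_term k) \<le> C * real k powr (Re v - 3)"
    using hg_term_decay by blast
  have "(\<lambda>k. real k powr (Re v - 3)) \<longlonglongrightarrow> 0"
    using Re_v_lt_3 by (intro tendsto_neg_powr filterlim_real_sequentially) auto
  from tendsto_mult_right_zero[OF this, of C] show ?thesis
    by (rule Lim_null_comparison[OF C])
qed

text \<open>For \<open>Re v \<ge> 2\<close> the terms need not be absolutely summable; grouping them in pairs gains a factor \<open>1/k\<close>.\<close>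

lemma hg_term_sums: "hg_term sums suminf hg_term"
proof -
  obtain C where C: "\<forall>\<^sub>F j in sequentially.
      norm (hg_term (2*j) + hg_term (Suc (2*j))) \<le> C * real j powr (Re v - 4)"
    using hg_pair_decay by blast
  have "summable (\<lambda>j. C * real j powr (Re v - 4))"
    using Re_v_lt_3 by (intro summable_mult) (simp add: summable_real_powr_iff)
  with C have "summable (\<lambda>j. hg_term (2*j) + hg_term (2*j+1))"
    by (simp add: summable_comparison_test_ev)
  then have "hg_term sums (\<Sum>j. hg_term (2*j) + hg_term (2*j+1))"
    by (rule sums_of_pair_sums[OF summable_sums hg_term_tendsto_zero])
  then show ?thesis by (simp add: sums_iff)
qed

lemma binomial_J_series_eq:
  assumes r: "0 \<le> r" "r < 1"
  shows "(\<Sum>k. ((-v) gchoose k) * of_real r ^ k * J k) = prefactor * (\<Sum>k. hg_term k * of_real r ^ k)"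
proof -
  obtain M where M: "\<And>k. norm (hg_term k) \<le> M"
    using convergent_imp_bounded[of hg_term] hg_term_tendsto_zero
    unfolding bounded_iff convergent_def by auto
  have sm: "summable (\<lambda>k. hg_term k * of_real r ^ k)"
    by (rule summable_norm_cancel[OF summable_norm_bounded_powser[OF M r]])
  have eq: "((-v) gchoose k) * of_real r ^ k * J k = prefactor * (hg_term k * of_real r ^ k)" for k
  proof -
    have "((-v) gchoose k) * of_real r ^ k * J k = (((-v) gchoose k) * J k) * of_real r ^ k"
      by (simp add: mult_ac)
    then show ?thesis unfolding gbinomial_J_eq by (simp add: mult_ac)
  qed
  show ?thesis unfolding eq by (rule suminf_mult[OF sm])
qed

lemma has_integral_hypergeometric:
  "((\<lambda>x. (1 + w x) powr (-v) * damped x) has_integral (prefactor * suminf hg_term)) {0..}"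
proof (rule has_integral_damped_limit)
  define t where "t n = 1 - 1 / (real n + 2)" for n
  have "(\<lambda>n. 1 / (real (n + 2))) \<longlonglongrightarrow> 0"
    using LIMSEQ_ignore_initial_segment[OF lim_const_over_n[of 1], of 2] by simp
  from tendsto_diff[OF tendsto_const[of 1] this]
  show t: "t \<longlonglongrightarrow> 1" by (simp add: t_def[abs_def] add_ac)
  show t01: "0 \<le> t n" "t n < 1" for n by (auto simp: t_def field_simps)
  have "(\<lambda>n. prefactor * (\<Sum>k. hg_term k * of_real (t n) ^ k)) \<longlonglongrightarrow> prefactor * suminf hg_term"
    by (intro tendsto_mult_left abel_limit_sequentially[OF hg_term_sums t t01])
  then show "(\<lambda>n. \<Sum>k. ((-v) gchoose k) * of_real (t n) ^ k * J k) \<longlonglongrightarrow> prefactor * suminf hg_term"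
    by (simp add: binomial_J_series_eq[OF t01])
qed

end

theorem mainTheorem15:
  fixes v a b c s :: complex
  assumes "Re v < 3" and "Re c > 0"
    and "Re (v * c + a + b) > 0" and "Re (v * c + a - b) > 0"
    and "Re (v * c - a + b) > 0" and "Re (v * c - a - b) > 0"
    and "s ^ 2 = a ^ 2 - b ^ 2"
    and "v/2 - s/(2*c) \<notin> \<int>\<^sub>\<le>\<^sub>0" and "v/2 + s/(2*c) \<notin> \<int>\<^sub>\<le>\<^sub>0"
    and "1 + (v/2 - a/(2*c) - b/(2*c)) \<notin> \<int>\<^sub>\<le>\<^sub>0"
    and "1 + (v/2 - a/(2*c) + b/(2*c)) \<notin> \<int>\<^sub>\<le>\<^sub>0"
    and "1 + (v/2 + a/(2*c) + b/(2*c)) \<notin> \<int>\<^sub>\<le>\<^sub>0"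
    and "1 + (v/2 + a/(2*c) - b/(2*c)) \<notin> \<int>\<^sub>\<le>\<^sub>0"
  shows "let \<sigma>1 = v/2 - s/(2*c); \<sigma>2 = v/2 + s/(2*c);
             \<sigma>3 = v/2 - a/(2*c) - b/(2*c); \<sigma>4 = v/2 - a/(2*c) + b/(2*c);
             \<sigma>5 = v/2 + a/(2*c) + b/(2*c); \<sigma>6 = v/2 + a/(2*c) - b/(2*c);
             P = (v * c - a - b) * (v * c + a + b) * (v * c - a + b) * (v * c + a - b)
         in ((\<lambda>x::real. sinh (a * complex_of_real x) * cosh (b * complex_of_real x) / cosh_pow v c x)
             has_integral
               ((2::complex) powr v * (v^2 * a * c^2 - a^3 + a * b^2) / P *
                hypergeom [v, 1 + \<sigma>1, 1 + \<sigma>2, \<sigma>3, \<sigma>4, \<sigma>5, \<sigma>6]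
                          [\<sigma>1, \<sigma>2, 1 + \<sigma>3, 1 + \<sigma>4, 1 + \<sigma>5, 1 + \<sigma>6] (-1)))
             {0<..}"
proof -
  interpret cosh_power_hypergeometric v a b c s
    by unfold_locales (use assms in simp_all)
  have series: "hypergeom [v, 1 + (v/2 - s/(2*c)), 1 + (v/2 + s/(2*c)), v/2 - a/(2*c) - b/(2*c),
         v/2 - a/(2*c) + b/(2*c), v/2 + a/(2*c) + b/(2*c), v/2 + a/(2*c) - b/(2*c)]
       [v/2 - s/(2*c), v/2 + s/(2*c), 1 + (v/2 - a/(2*c) - b/(2*c)), 1 + (v/2 - a/(2*c) + b/(2*c)),
         1 + (v/2 + a/(2*c) + b/(2*c)), 1 + (v/2 + a/(2*c) - b/(2*c))] (-1) = suminf hg_term"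
    unfolding hypergeom_def hg_term_def[abs_def] \<sigma>1_def \<sigma>2_def \<sigma>3_def \<sigma>4_def \<sigma>5_def \<sigma>6_def ..
  have "((\<lambda>x. 2 powr v * ((1 + w x) powr (-v) * damped x)) has_integral
      2 powr v * (prefactor * suminf hg_term)) {0..}"
    by (rule has_integral_mult_right[OF has_integral_hypergeometric])
  then have "((\<lambda>x::real. sinh (a * complex_of_real x) * cosh (b * complex_of_real x) / cosh_pow v c x)
      has_integral 2 powr v * (prefactor * suminf hg_term)) {0<..}"
    using has_integral_interior[of "{0::real..}" "\<lambda>x. 2 powr v * ((1 + w x) powr (-v) * damped x)"]
    unfolding sinh_cosh_div_cosh_pow w_def damped_def by simp
  then show ?thesis
    unfolding Let_def series prefactor_def by (simp add: mult.assoc)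
qed

end
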